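(* Let $D=D_vD_h$, let $U\in\mathbb{C}^{D\times D}$ be drawn from a unitary $2$-design, and let $H=U^\dagger S U$ for some diagonal matrix $S\in\mathbb{C}^{D\times D}$. If either $\rho=U|0\rangle\langle 0|U^\dagger$ (unitary network) or $\rho=e^{-H}/{\rm Tr}(e^{-H})$ (Boltzmann machine), then for any bounded operator $O_{\rm obj}\in\mathbb{C}^{D_v\times D_v}$ acting on the visible subspace, $$\left|{\rm Tr}\big((O_{\rm obj}\otimes I)(\rho-I/D)\big)\right|\in O\left(\|O_{\rm obj}\|_\infty\sqrt{\frac{D_v}{D_h}}\right)$$ with high probability over $U$.
   Context: The Hilbert space $\mathbb{C}^{D}$ is the tensor product of a visible space of dimension $D_v$ and a hidden space of dimension $D_h$; $O_{\rm obj}\otimes I$ acts as $O_{\rm obj}$ on the visible factor and as the identity on the hidden factor. A unitary $2$-design is a distribution over unitaries whose second moments (expectations of polynomials of degree at most $2$ in the entries of $U$ and at most $2$ in those of $U^\dagger$) agree with those of the Haar measure. $\|\cdot\|_\infty$ is the operator norm. *)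

theory Defs
  imports "HOL-Probability.Probability" "Jordan_Normal_Form.Matrix"
begin

definition adj :: "complex mat \<Rightarrow> complex mat" where
  "adj A = mat (dim_col A) (dim_row A) (\<lambda>(i,j). cnj (A $$ (j,i)))"

definition mtrace :: "complex mat \<Rightarrow> complex" where
  "mtrace A = (\<Sum>i<dim_row A. A $$ (i,i))"

text \<open>Kronecker (tensor) product; the first factor is the visible one.\<close>
definition kron :: "complex mat \<Rightarrow> complex mat \<Rightarrow> complex mat" where
  "kron A B = mat (dim_row A * dim_row B) (dim_col A * dim_col B)
     (\<lambda>(i,j). A $$ (i div dim_row B, j div dim_col B) * B $$ (i mod dim_row B, j mod dim_col B))"

definition outer :: "complex vec \<Rightarrow> complex vec \<Rightarrow> complex mat" where
  "outer v w = mat (dim_vec v) (dim_vec w) (\<lambda>(i,j). v $ i * cnj (w $ j))"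

definition vnorm :: "complex vec \<Rightarrow> real" where
  "vnorm v = sqrt (\<Sum>i<dim_vec v. (cmod (v $ i))\<^sup>2)"

definition opnorm :: "complex mat \<Rightarrow> real" where
  "opnorm A = Sup {vnorm (A *\<^sub>v x) | x. x \<in> carrier_vec (dim_col A) \<and> vnorm x = 1}"

definition mat_exp :: "complex mat \<Rightarrow> complex mat" where
  "mat_exp A = mat (dim_row A) (dim_col A)
     (\<lambda>(i,j). \<Sum>k. ((A ^\<^sub>m k) $$ (i,j)) / of_nat (fact k))"

definition unitary_mat :: "nat \<Rightarrow> complex mat \<Rightarrow> bool" where
  "unitary_mat n U \<longleftrightarrow> U \<in> carrier_mat n n \<and> adj U * U = 1\<^sub>m n"

definition mat_space :: "nat \<Rightarrow> complex mat measure" where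
  "mat_space n = sigma (carrier_mat n n)
     {{A \<in> carrier_mat n n. A $$ (i,j) \<in> B} | i j B. i < n \<and> j < n \<and> B \<in> sets borel}"

definition haar_unitary :: "nat \<Rightarrow> complex mat measure \<Rightarrow> bool" where
  "haar_unitary n H \<longleftrightarrow> prob_space H \<and> sets H = sets (mat_space n) \<and>
     (AE U in H. unitary_mat n U) \<and>
     (\<forall>V. unitary_mat n V \<longrightarrow> distr H (mat_space n) (\<lambda>U. V * U) = H)"

text \<open>Monomial in the entries of U (indices ks) and of conj U, i.e. of U^dagger (indices ls).\<close>
definition monomial :: "(nat \<times> nat) list \<Rightarrow> (nat \<times> nat) list \<Rightarrow> complex mat \<Rightarrow> complex" where
  "monomial ks ls U = (\<Prod>k\<leftarrow>ks. U $$ k) * (\<Prod>l\<leftarrow>ls. cnj (U $$ l))"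

definition unitary_2_design :: "nat \<Rightarrow> complex mat measure \<Rightarrow> bool" where
  "unitary_2_design n \<mu> \<longleftrightarrow> prob_space \<mu> \<and> sets \<mu> = sets (mat_space n) \<and>
     (AE U in \<mu>. unitary_mat n U) \<and>
     (\<exists>H. haar_unitary n H \<and>
        (\<forall>ks ls. length ks \<le> 2 \<and> length ls \<le> 2 \<and> set ks \<union> set ls \<subseteq> {..<n} \<times> {..<n} \<longrightarrow>
           integrable \<mu> (monomial ks ls) \<and>
           (\<integral>U. monomial ks ls U \<partial>\<mu>) = (\<integral>U. monomial ks ls U \<partial>H)))"

definition rho_net :: "nat \<Rightarrow> complex mat \<Rightarrow> complex mat" where
  "rho_net n U = U * outer (unit_vec n 0) (unit_vec n 0) * adj U"

definition rho_boltz :: "complex mat \<Rightarrow> complex mat \<Rightarrow> complex mat" where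
  "rho_boltz S U = (let H = adj U * S * U in (1 / mtrace (mat_exp (- H))) \<cdot>\<^sub>m mat_exp (- H))"

definition deviation :: "complex mat \<Rightarrow> nat \<Rightarrow> complex mat \<Rightarrow> complex" where
  "deviation Obj Dh \<rho> = mtrace (kron Obj (1\<^sub>m Dh) *
      (\<rho> - (1 / of_nat (dim_row Obj * Dh)) \<cdot>\<^sub>m 1\<^sub>m (dim_row Obj * Dh)))"

end

(*
  Write Q(U) = Tr (X U Y U^dag) with Tr Y = 0. Both deviations are of this form: for the
  unitary network X = O (x) I and Y = |0><0| - I/D, for the Boltzmann machine X is the diagonal
  of Gibbs weights and Y = O (x) I - Tr (O (x) I) I/D.

  |Q(U)|^2 is a polynomial of degree (2,2) in the entries of U and U^dag, so a unitary 2-design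
  reproduces its Haar expectation. Under the Haar measure the tensor
  T_abcd = E[(U Y U^dag)_ab conj (U Y U^dag)_cd] is invariant under U -> V U; testing this
  invariance with diagonal phases, transpositions and a Hadamard gate forces
  T_abcd = beta [a = b][c = d] + gamma [a = c][b = d], and Tr Y = 0 together with the Frobenius
  norm of Y gives gamma = |Y|_F^2 / (D^2 - 1) and beta = - gamma / D. Hence
  E |Q|^2 <= |X|_F^2 |Y|_F^2 / (D^2 - 1) <= 2 |O|^2 / D, since |O (x) I|_F^2 <= D |O|^2 and the
  other factor has Frobenius norm at most 1. Chebyshev's inequality with
  t = sqrt (2 / delta) |O| sqrt (D_v / D_h) bounds the tail by delta / D_v^2.
*)

theory Submission
  imports Defs "Jordan_Normal_Form.Determinant"
begin

section \<open>Entrywise matrix algebra and unitary matrices\<close>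

declare index_mult_mat(1)[simp del]

lemma index_mult_mat_lessThan:
  "A \<in> carrier_mat nr m \<Longrightarrow> B \<in> carrier_mat m nc \<Longrightarrow> i < nr \<Longrightarrow> j < nc \<Longrightarrow>
   (A * B) $$ (i,j) = (\<Sum>k<m. A $$ (i,k) * B $$ (k,j))"
  by (auto simp: index_mult_mat scalar_prod_def atLeast0LessThan intro!: sum.cong)

lemma sum_delta_mult_left:
  fixes c :: "'a::comm_semiring_1" and n :: nat
  shows "x < n \<Longrightarrow> (\<Sum>a<n. (if a = x then c else 0) * G a) = c * G x"
  by (simp add: if_distrib[of "\<lambda>u. u * _"] cong: if_cong)

lemma sum_sum_if_both_zero:
  assumes "0 < (n::nat)"
  shows "(\<Sum>p<n. \<Sum>q<n. if p = 0 \<and> q = 0 then c p q else 0) = c 0 0"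
proof -
  have "(\<Sum>q<n. if p = 0 \<and> q = 0 then c p q else 0) = (if p = 0 then c 0 0 else 0)" for p
    using assms by (cases "p = 0") simp_all
  then show ?thesis using assms by simp
qed

lemma index_adj [simp]:
  "i < dim_col A \<Longrightarrow> j < dim_row A \<Longrightarrow> adj A $$ (i,j) = cnj (A $$ (j,i))"
  "dim_row (adj A) = dim_col A" "dim_col (adj A) = dim_row A"
  by (auto simp: adj_def)

lemma adj_carrier_mat [simp]: "A \<in> carrier_mat n m \<Longrightarrow> adj A \<in> carrier_mat m n"
  by (auto simp: adj_def)

lemma adj_adj [simp]: "adj (adj A) = A"
  by (rule eq_matI) (auto simp: adj_def)

lemma adj_mult_mat:
  assumes A: "A \<in> carrier_mat n m" and B: "B \<in> carrier_mat m k"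
  shows "adj (A * B) = adj B * adj A"
proof (rule eq_matI)
  fix i j assume "i < dim_row (adj B * adj A)" "j < dim_col (adj B * adj A)"
  then have i: "i < k" and j: "j < n" using A B by auto
  have "adj (A * B) $$ (i,j) = cnj (\<Sum>l<m. A $$ (j,l) * B $$ (l,i))"
    using A B i j by (simp add: index_mult_mat_lessThan[OF A B j i])
  also have "\<dots> = (\<Sum>l<m. adj B $$ (i,l) * adj A $$ (l,j))"
    using A B i j by (auto intro!: sum.cong simp: mult.commute)
  also have "\<dots> = (adj B * adj A) $$ (i,j)"
    using A B i j by (simp add: index_mult_mat_lessThan[of "adj B" k m "adj A" n])
  finally show "adj (A * B) $$ (i,j) = (adj B * adj A) $$ (i,j)" .
qed (use A B in auto)

lemma mtrace_mult_comm:
  assumes A: "A \<in> carrier_mat n m" and B: "B \<in> carrier_mat m n"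
  shows "mtrace (A * B) = mtrace (B * A)"
proof -
  have "mtrace (A * B) = (\<Sum>i<n. \<Sum>l<m. A $$ (i,l) * B $$ (l,i))"
    unfolding mtrace_def using A B by (auto intro!: sum.cong simp: index_mult_mat_lessThan[OF A B])
  also have "\<dots> = (\<Sum>l<m. \<Sum>i<n. B $$ (l,i) * A $$ (i,l))"
    by (subst sum.swap) (simp add: mult.commute)
  also have "\<dots> = mtrace (B * A)"
    unfolding mtrace_def using A B by (auto intro!: sum.cong simp: index_mult_mat_lessThan[OF B A])
  finally show ?thesis .
qed

lemma mtrace_mult_adj:
  "A \<in> carrier_mat n m \<Longrightarrow> mtrace (A * adj A) = of_real (\<Sum>i<n. \<Sum>j<m. (cmod (A $$ (i,j)))\<^sup>2)"
  unfolding mtrace_def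
  by (auto intro!: sum.cong simp: index_mult_mat_lessThan[of A n m "adj A" n] complex_norm_square
      simp del: of_real_power)

lemma unitary_mat_carrier: "unitary_mat n U \<Longrightarrow> U \<in> carrier_mat n n"
  by (simp add: unitary_mat_def)

lemma unitary_mat_adj_mult: "unitary_mat n U \<Longrightarrow> adj U * U = 1\<^sub>m n"
  by (simp add: unitary_mat_def)

lemma unitary_mat_mult_adj: "unitary_mat n U \<Longrightarrow> U * adj U = 1\<^sub>m n"
  unfolding unitary_mat_def by (metis adj_carrier_mat mat_mult_left_right_inverse)

lemma mult_mat_inverse_cancel:
  fixes A B X Y :: "'a::semiring_1 mat"
  assumes "A * B = 1\<^sub>m n" "X \<in> carrier_mat m n" "A \<in> carrier_mat n n" "B \<in> carrier_mat n n"
    "Y \<in> carrier_mat n k"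
  shows "(X * A) * (B * Y) = X * Y"
proof -
  have "(X * A) * (B * Y) = X * (A * (B * Y))"
    using assms by (intro assoc_mult_mat) auto
  also have "A * (B * Y) = (A * B) * Y"
    using assms by (intro assoc_mult_mat[symmetric]) auto
  finally show ?thesis using assms(1) by (simp add: left_mult_one_mat[OF assms(5)])
qed

lemma unitary_matI:
  assumes "V \<in> carrier_mat n n"
    and "\<And>i j. i < n \<Longrightarrow> j < n \<Longrightarrow> (\<Sum>k<n. cnj (V $$ (k,i)) * V $$ (k,j)) = (if i = j then 1 else 0)"
  shows "unitary_mat n V"
  unfolding unitary_mat_def
proof (intro conjI assms(1) eq_matI)
  fix i j assume "i < dim_row (1\<^sub>m n)" "j < dim_col (1\<^sub>m n)"
  then show "(adj V * V) $$ (i,j) = 1\<^sub>m n $$ (i,j)"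
    using assms by (auto intro!: sum.cong simp: index_mult_mat_lessThan[of "adj V" n n V n])
qed (use assms in auto)

lemma unitary_row_inner:
  assumes "unitary_mat n V" "i < n" "j < n"
  shows "(\<Sum>k<n. V $$ (i,k) * cnj (V $$ (j,k))) = (if i = j then 1 else 0)"
proof -
  have V: "V \<in> carrier_mat n n" using assms(1) by (rule unitary_mat_carrier)
  have "(\<Sum>k<n. V $$ (i,k) * cnj (V $$ (j,k))) = (V * adj V) $$ (i,j)"
    using V assms by (auto intro!: sum.cong simp: index_mult_mat_lessThan[of V n n "adj V" n])
  then show ?thesis using unitary_mat_mult_adj[OF assms(1)] assms by simp
qed

lemma unitary_col_norm:
  assumes "unitary_mat n V" "j < n"
  shows "(\<Sum>k<n. (cmod (V $$ (k,j)))\<^sup>2) = 1"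
proof -
  have V: "V \<in> carrier_mat n n" using assms(1) by (rule unitary_mat_carrier)
  have "of_real (\<Sum>k<n. (cmod (V $$ (k,j)))\<^sup>2) = (adj V * V) $$ (j,j)"
    using V assms by (auto intro!: sum.cong simp: index_mult_mat_lessThan[of "adj V" n n V n]
        complex_norm_square mult.commute simp del: of_real_power)
  then show ?thesis
    using unitary_mat_adj_mult[OF assms(1)] assms(2) by (metis index_one_mat(1) of_real_eq_1_iff)
qed

lemma unitary_entry_norm_le_1:
  assumes "unitary_mat n U" "i < n" "j < n"
  shows "cmod (U $$ (i,j)) \<le> 1"
proof -
  have "(cmod (U $$ (i,j)))\<^sup>2 \<le> (\<Sum>k<n. (cmod (U $$ (k,j)))\<^sup>2)"
    using assms(2) by (intro member_le_sum) auto
  then show ?thesis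
    using unitary_col_norm[OF assms(1,3)] by (simp add: power_le_one_iff abs_le_square_iff)
qed

section \<open>Unitarily invariant four-tensors\<close>

definition phase :: "nat \<Rightarrow> nat \<Rightarrow> complex" where
  "phase p i = (if i = p then \<i> else 1)"

definition phase_mat :: "nat \<Rightarrow> nat \<Rightarrow> complex mat" where
  "phase_mat n p = mat n n (\<lambda>(i,j). if i = j then phase p i else 0)"

definition transposition_mat :: "nat \<Rightarrow> nat \<Rightarrow> nat \<Rightarrow> complex mat" where
  "transposition_mat n x y = mat n n (\<lambda>(i,j). if j = Transposition.transpose x y i then 1 else 0)"

definition inv_sqrt2 :: complex where
  "inv_sqrt2 = of_real (1 / sqrt 2)"

definition hadamard_mat :: "nat \<Rightarrow> complex mat" where
  "hadamard_mat n = mat n n (\<lambda>(i,j).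
     if i < 2 \<and> j < 2 then (if i = 1 \<and> j = 1 then - inv_sqrt2 else inv_sqrt2)
     else if i = j then 1 else 0)"

lemma cnj_inv_sqrt2 [simp]: "cnj inv_sqrt2 = inv_sqrt2"
  by (simp add: inv_sqrt2_def)

lemma inv_sqrt2_mult_self: "inv_sqrt2 * inv_sqrt2 = 1/2"
  unfolding inv_sqrt2_def of_real_mult[symmetric] by (simp add: divide_simps)

lemma transpose_less: "x < n \<Longrightarrow> y < n \<Longrightarrow> i < n \<Longrightarrow> Transposition.transpose x y i < (n::nat)"
  by (simp add: Transposition.transpose_def)

lemma phase_mat_unitary: "unitary_mat n (phase_mat n p)"
proof (rule unitary_matI)
  fix i j assume ij: "i < n" "j < n"
  have "(\<Sum>k<n. cnj (phase_mat n p $$ (k,i)) * phase_mat n p $$ (k,j))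
      = (\<Sum>k<n. (if k = i then cnj (phase p i) else 0) * (if k = j then phase p j else 0))"
    by (intro sum.cong) (auto simp: phase_mat_def ij)
  also have "\<dots> = (if i = j then 1 else 0)"
    using ij by (simp add: sum_delta_mult_left phase_def)
  finally show "(\<Sum>k<n. cnj (phase_mat n p $$ (k,i)) * phase_mat n p $$ (k,j))
      = (if i = j then 1 else 0)" .
qed (simp add: phase_mat_def)

lemma transposition_mat_unitary:
  assumes "x < n" "y < n"
  shows "unitary_mat n (transposition_mat n x y)"
proof (rule unitary_matI)
  let ?\<tau> = "Transposition.transpose x y"
  fix i j assume ij: "i < n" "j < n"
  have "(\<Sum>k<n. cnj (transposition_mat n x y $$ (k,i)) * transposition_mat n x y $$ (k,j))
      = (\<Sum>k<n. (if k = ?\<tau> i then 1 else 0) * (if j = ?\<tau> k then 1 else 0))"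
    by (intro sum.cong) (auto simp: transposition_mat_def ij transpose_eq_iff)
  also have "\<dots> = (if i = j then 1 else 0)"
    using ij assms by (subst sum_delta_mult_left) (auto simp: transpose_eq_iff transpose_less)
  finally show "(\<Sum>k<n. cnj (transposition_mat n x y $$ (k,i)) * transposition_mat n x y $$ (k,j))
      = (if i = j then 1 else 0)" .
qed (simp add: transposition_mat_def)

lemma hadamard_mat_unitary:
  assumes n: "2 \<le> n"
  shows "unitary_mat n (hadamard_mat n)"
proof (rule unitary_matI)
  fix i j assume ij: "i < n" "j < n"
  show "(\<Sum>k<n. cnj (hadamard_mat n $$ (k,i)) * hadamard_mat n $$ (k,j)) = (if i = j then 1 else 0)"
  proof (cases "i < 2 \<and> j < 2")
    case True
    have "(\<Sum>k<n. cnj (hadamard_mat n $$ (k,i)) * hadamard_mat n $$ (k,j))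
        = (\<Sum>k\<in>{0,1}. cnj (hadamard_mat n $$ (k,i)) * hadamard_mat n $$ (k,j))"
      using True ij n by (intro sum.mono_neutral_right) (auto simp: hadamard_mat_def)
    then show ?thesis
      using True ij n by (auto simp: hadamard_mat_def less_2_cases_iff inv_sqrt2_mult_self)
  next
    case False
    have "(\<Sum>k<n. cnj (hadamard_mat n $$ (k,i)) * hadamard_mat n $$ (k,j))
        = (\<Sum>k<n. (if k = i then 1 else 0) * (if k = j then 1 else 0))"
      using False ij by (intro sum.cong) (auto simp: hadamard_mat_def)
    then show ?thesis using ij by (simp add: sum_delta_mult_left)
  qed
qed (simp add: hadamard_mat_def)

lemma sum_phase_mat:
  assumes "i < n"
  shows "(\<Sum>a<n. phase_mat n p $$ (i,a) * G a) = phase p i * G i"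
    and "(\<Sum>a<n. cnj (phase_mat n p $$ (i,a)) * G a) = cnj (phase p i) * G i"
proof -
  have "(\<Sum>a<n. phase_mat n p $$ (i,a) * G a) = (\<Sum>a<n. (if a = i then phase p i else 0) * G a)"
    "(\<Sum>a<n. cnj (phase_mat n p $$ (i,a)) * G a) = (\<Sum>a<n. (if a = i then cnj (phase p i) else 0) * G a)"
    using assms by (auto intro!: sum.cong simp: phase_mat_def)
  then show "(\<Sum>a<n. phase_mat n p $$ (i,a) * G a) = phase p i * G i"
    and "(\<Sum>a<n. cnj (phase_mat n p $$ (i,a)) * G a) = cnj (phase p i) * G i"
    using assms by (simp_all add: sum_delta_mult_left)
qed

lemma sum_transposition_mat:
  assumes "i < n" "x < n" "y < n"
  shows "(\<Sum>a<n. transposition_mat n x y $$ (i,a) * G a) = G (Transposition.transpose x y i)"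
    and "(\<Sum>a<n. cnj (transposition_mat n x y $$ (i,a)) * G a) = G (Transposition.transpose x y i)"
proof -
  let ?\<tau> = "Transposition.transpose x y"
  have "(\<Sum>a<n. transposition_mat n x y $$ (i,a) * G a) = (\<Sum>a<n. (if a = ?\<tau> i then 1 else 0) * G a)"
    "(\<Sum>a<n. cnj (transposition_mat n x y $$ (i,a)) * G a) = (\<Sum>a<n. (if a = ?\<tau> i then 1 else 0) * G a)"
    using assms by (auto intro!: sum.cong simp: transposition_mat_def)
  then show "(\<Sum>a<n. transposition_mat n x y $$ (i,a) * G a) = G (?\<tau> i)"
    and "(\<Sum>a<n. cnj (transposition_mat n x y $$ (i,a)) * G a) = G (?\<tau> i)"
    using assms by (simp_all add: sum_delta_mult_left transpose_less)
qed

lemma sum_hadamard_mat_row0: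
  assumes "2 \<le> n"
  shows "(\<Sum>a<n. hadamard_mat n $$ (0,a) * G a) = inv_sqrt2 * (G 0 + G 1)"
    and "(\<Sum>a<n. cnj (hadamard_mat n $$ (0,a)) * G a) = inv_sqrt2 * (G 0 + G 1)"
proof -
  have "(\<Sum>a<n. hadamard_mat n $$ (0,a) * G a) = (\<Sum>a\<in>{0,1}. hadamard_mat n $$ (0,a) * G a)"
    using assms by (intro sum.mono_neutral_right) (auto simp: hadamard_mat_def)
  also have "\<dots> = inv_sqrt2 * (G 0 + G 1)"
    using assms by (simp add: hadamard_mat_def distrib_left)
  finally show "(\<Sum>a<n. hadamard_mat n $$ (0,a) * G a) = inv_sqrt2 * (G 0 + G 1)" .
  have "(\<Sum>a<n. cnj (hadamard_mat n $$ (0,a)) * G a) = (\<Sum>a\<in>{0,1}. cnj (hadamard_mat n $$ (0,a)) * G a)"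
    using assms by (intro sum.mono_neutral_right) (auto simp: hadamard_mat_def)
  also have "\<dots> = inv_sqrt2 * (G 0 + G 1)"
    using assms by (simp add: hadamard_mat_def distrib_left)
  finally show "(\<Sum>a<n. cnj (hadamard_mat n $$ (0,a)) * G a) = inv_sqrt2 * (G 0 + G 1)" .
qed

text \<open>The transformation law of \<open>T a b c d = E[(U Y U\<^sup>\<dagger>)\<^sub>a\<^sub>b cnj ((U Y U\<^sup>\<dagger>)\<^sub>c\<^sub>d)]\<close>
  under the substitution \<open>U \<mapsto> V U\<close>.\<close>
definition unitarily_invariant :: "nat \<Rightarrow> (nat \<Rightarrow> nat \<Rightarrow> nat \<Rightarrow> nat \<Rightarrow> complex) \<Rightarrow> bool" where
  "unitarily_invariant n T \<longleftrightarrow> (\<forall>V i j k l. unitary_mat n V \<longrightarrow> i < n \<longrightarrow> j < n \<longrightarrow> k < n \<longrightarrow> l < n \<longrightarrow>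
     T i j k l = (\<Sum>a<n. V $$ (i,a) * (\<Sum>b<n. cnj (V $$ (j,b)) * (\<Sum>c<n. cnj (V $$ (k,c)) *
        (\<Sum>d<n. V $$ (l,d) * T a b c d)))))"

context
  fixes n :: nat and T :: "nat \<Rightarrow> nat \<Rightarrow> nat \<Rightarrow> nat \<Rightarrow> complex"
  assumes invariant: "unitarily_invariant n T"
begin

lemma unitarily_invariantD:
  assumes "unitary_mat n V" "i < n" "j < n" "k < n" "l < n"
  shows "T i j k l = (\<Sum>a<n. V $$ (i,a) * (\<Sum>b<n. cnj (V $$ (j,b)) * (\<Sum>c<n. cnj (V $$ (k,c)) *
        (\<Sum>d<n. V $$ (l,d) * T a b c d))))"
  using invariant assms unfolding unitarily_invariant_def by blast

lemma invariant_under_phase: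
  assumes "i < n" "j < n" "k < n" "l < n"
  shows "T i j k l = phase p i * cnj (phase p j) * cnj (phase p k) * phase p l * T i j k l"
  using unitarily_invariantD[OF phase_mat_unitary[of n p] assms] assms
  by (simp add: sum_phase_mat mult.assoc)

lemma invariant_vanishes:
  assumes "i < n" "j < n" "k < n" "l < n" "\<not> ((i = j \<and> k = l) \<or> (i = k \<and> j = l))"
  shows "T i j k l = 0"
proof -
  obtain p where p: "phase p i * cnj (phase p j) * cnj (phase p k) * phase p l \<noteq> 1"
  proof (cases "i = j")
    case True
    then show ?thesis using assms by (intro that[of k]) (auto simp: phase_def complex_eq_iff)
  next
    case False
    show ?thesis
    proof (cases "i = k")
      case True
      then show ?thesis using assms \<open>i \<noteq> j\<close> by (intro that[of j]) (auto simp: phase_def complex_eq_iff)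
    next
      case False
      then show ?thesis using assms \<open>i \<noteq> j\<close> by (intro that[of i]) (auto simp: phase_def complex_eq_iff)
    qed
  qed
  then show ?thesis using invariant_under_phase[OF assms(1-4), of p] by (metis mult_cancel_right2)
qed

lemma invariant_under_transposition:
  assumes "i < n" "j < n" "k < n" "l < n" "x < n" "y < n"
  shows "T i j k l = T (Transposition.transpose x y i) (Transposition.transpose x y j)
                       (Transposition.transpose x y k) (Transposition.transpose x y l)"
  using unitarily_invariantD[OF transposition_mat_unitary[of x n y] assms(1-4)] assms
  by (simp add: sum_transposition_mat transpose_less)

lemma invariant_under_hadamard:
  assumes "2 \<le> n"
  shows "4 * T 0 0 0 0 = T 0 0 0 0 + T 1 1 1 1 + T 0 0 1 1 + T 1 1 0 0 + T 0 1 0 1 + T 1 0 1 0"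
proof -
  let ?r = inv_sqrt2 and ?S = "T 0 0 0 0 + T 1 1 1 1 + T 0 0 1 1 + T 1 1 0 0 + T 0 1 0 1 + T 1 0 1 0"
  have n: "0 < n" "1 < n" using assms by auto
  have "T 0 0 0 0 = ?r * (?r * (?r * (?r * ?S)))"
    using n
    by (subst unitarily_invariantD[OF hadamard_mat_unitary[OF assms] n(1) n(1) n(1) n(1)])
      (simp only: sum_hadamard_mat_row0[OF assms], simp add: invariant_vanishes algebra_simps)
  also have "\<dots> = (?r * ?r) * (?r * ?r) * ?S" by (simp only: mult.assoc)
  finally show ?thesis by (simp add: inv_sqrt2_mult_self)
qed

lemma invariant_diag: "a < n \<Longrightarrow> T a a a a = T 0 0 0 0"
  using invariant_under_transposition[of 0 0 0 0 0 a] by simp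

lemma invariant_relabel:
  assumes "a < n" "c < n" "a \<noteq> c"
  shows "T a a c c = T 0 0 1 1" "T a c a c = T 0 1 0 1"
proof -
  let ?\<tau> = "Transposition.transpose"
  define d where "d = ?\<tau> 0 a c"
  have d: "d < n" "d \<noteq> 0" "?\<tau> 0 a d = c" using assms by (auto simp: d_def Transposition.transpose_def)
  have n1: "1 < n" using assms by auto
  have "T 0 0 1 1 = T 0 0 d d" "T 0 1 0 1 = T 0 d 0 d"
    using invariant_under_transposition[of 0 0 1 1 1 d] invariant_under_transposition[of 0 1 0 1 1 d]
      d n1
    by (auto simp: transpose_eq_iff)
  moreover have "T 0 0 d d = T a a c c" "T 0 d 0 d = T a c a c"
    using invariant_under_transposition[of 0 0 d d 0 a] invariant_under_transposition[of 0 d 0 d 0 a]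
      d assms
    by auto
  ultimately show "T a a c c = T 0 0 1 1" "T a c a c = T 0 1 0 1" by simp_all
qed

lemma invariant_tensor_form:
  assumes "2 \<le> n" "a < n" "b < n" "c < n" "d < n"
  shows "T a b c d = (if a = b \<and> c = d then T 0 0 1 1 else 0) + (if a = c \<and> b = d then T 0 1 0 1 else 0)"
proof -
  have n: "0 < n" "1 < n" using assms by auto
  have "2 * T 0 0 0 0 = 2 * (T 0 0 1 1 + T 0 1 0 1)"
    using invariant_under_hadamard[OF assms(1)] invariant_diag[of 1] invariant_relabel[of 1 0] n
    by (simp add: distrib_left)
  then have diag: "T 0 0 0 0 = T 0 0 1 1 + T 0 1 0 1"
    by (rule mult_left_cancel[THEN iffD1, rotated]) simp
  consider "a = b" "c = d" "a = c" | "a = b" "c = d" "a \<noteq> c" | "a = c" "b = d" "a \<noteq> b"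
    | "\<not> ((a = b \<and> c = d) \<or> (a = c \<and> b = d))"
    by blast
  then show ?thesis
  proof cases
    case 1
    then show ?thesis using diag invariant_diag[OF assms(2)] by simp
  next
    case 2
    then show ?thesis using invariant_relabel(1)[OF assms(2,4)] by simp
  next
    case 3
    then show ?thesis using invariant_relabel(2)[OF assms(2,3)] by simp
  next
    case 4
    then show ?thesis using invariant_vanishes[OF assms(2-5)] by auto
  qed
qed

end

lemma contraction_delta_tensor:
  fixes X :: "nat \<Rightarrow> nat \<Rightarrow> complex"
  shows "(\<Sum>a<n. \<Sum>b<n. \<Sum>c<n. \<Sum>d<n. X b a * cnj (X d c) *
            ((if a = b \<and> c = d then \<beta> else 0) + (if a = c \<and> b = d then \<gamma> else 0)))
       = \<beta> * of_real ((cmod (\<Sum>a<n. X a a))\<^sup>2) + \<gamma> * of_real (\<Sum>a<n. \<Sum>b<n. (cmod (X b a))\<^sup>2)"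
proof -
  have sum_d: "(\<Sum>d<n. X b a * cnj (X d c) *
        ((if a = b \<and> c = d then \<beta> else 0) + (if a = c \<and> b = d then \<gamma> else 0)))
     = (if a = b then X b a * cnj (X c c) * \<beta> else 0) + (if a = c then X b a * cnj (X b c) * \<gamma> else 0)"
    if "b < n" "c < n" for a b c
    using that
    by (simp add: distrib_left sum.distrib if_distrib[of "\<lambda>x. _ * x"] sum.delta' cong: if_cong)
  have sum_c: "(\<Sum>c<n. (if a = b then X b a * cnj (X c c) * \<beta> else 0)
        + (if a = c then X b a * cnj (X b c) * \<gamma> else 0))
     = (if a = b then X b a * cnj (\<Sum>c<n. X c c) * \<beta> else 0) + X b a * cnj (X b a) * \<gamma>"
    if "a < n" for a b
    using that by (simp add: sum.distrib sum_distrib_left sum_distrib_right sum.delta)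
  have sum_b: "(\<Sum>b<n. (if a = b then X b a * cnj (\<Sum>c<n. X c c) * \<beta> else 0) + X b a * cnj (X b a) * \<gamma>)
     = X a a * cnj (\<Sum>c<n. X c c) * \<beta> + (\<Sum>b<n. X b a * cnj (X b a)) * \<gamma>"
    if "a < n" for a
    using that by (simp add: sum.distrib sum_distrib_right sum.delta)
  have "(\<Sum>a<n. \<Sum>b<n. \<Sum>c<n. \<Sum>d<n. X b a * cnj (X d c) *
            ((if a = b \<and> c = d then \<beta> else 0) + (if a = c \<and> b = d then \<gamma> else 0)))
      = (\<Sum>a<n. X a a * cnj (\<Sum>c<n. X c c) * \<beta> + (\<Sum>b<n. X b a * cnj (X b a)) * \<gamma>)"
    by (simp add: sum_d sum_c sum_b)
  also have "\<dots> = \<beta> * ((\<Sum>a<n. X a a) * cnj (\<Sum>c<n. X c c)) + \<gamma> * (\<Sum>a<n. \<Sum>b<n. X b a * cnj (X b a))"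
    by (simp add: sum.distrib sum_distrib_left sum_distrib_right ac_simps del: cnj_sum)
  finally show ?thesis
    by (simp add: complex_norm_square del: cnj_sum of_real_power)
qed

lemma invariant_tensor_coefficients:
  fixes F :: real
  assumes "unitarily_invariant n T" and n: "2 \<le> n"
    and tr: "(\<Sum>a<n. T a a 0 0) = 0" and fro: "(\<Sum>a<n. \<Sum>b<n. T a b a b) = of_real F"
  shows "T 0 1 0 1 = of_real (F / ((real n)\<^sup>2 - 1))" and "T 0 0 1 1 = - T 0 1 0 1 / of_nat n"
proof -
  define \<beta> \<gamma> where "\<beta> = T 0 0 1 1" and "\<gamma> = T 0 1 0 1"
  have form: "T a b c d = (if a = b \<and> c = d then \<beta> else 0) + (if a = c \<and> b = d then \<gamma> else 0)"
    if "a < n" "b < n" "c < n" "d < n" for a b c d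
    using invariant_tensor_form[OF assms(1) n that] by (simp add: \<beta>_def \<gamma>_def)
  have "(\<Sum>a<n. T a a 0 0) = (\<Sum>a<n. \<beta> + (if a = 0 then \<gamma> else 0))"
    using n by (intro sum.cong) (auto simp: form)
  with tr n have trace_eq: "of_nat n * \<beta> + \<gamma> = 0" by (simp add: sum.distrib)
  have "(\<Sum>a<n. \<Sum>b<n. T a b a b) = (\<Sum>a<n. \<Sum>b<n. (if a = b then \<beta> else 0) + \<gamma>)"
    by (intro sum.cong) (auto simp: form)
  with fro have fro_eq: "of_nat n * \<beta> + of_nat n * of_nat n * \<gamma> = of_real F"
    by (simp add: sum.distrib algebra_simps)
  have "(4::real) \<le> real n * real n" using mult_mono[of 2 "real n" 2 "real n"] n by simp
  moreover have "(of_nat n * of_nat n - 1 :: complex) = of_real (real n * real n - 1)" by simp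
  ultimately have nonzero: "(of_nat n * of_nat n - 1 :: complex) \<noteq> 0" by (simp only: of_real_eq_0_iff)
  have "\<gamma> * (of_nat n * of_nat n - 1)
      = (of_nat n * \<beta> + of_nat n * of_nat n * \<gamma>) - (of_nat n * \<beta> + \<gamma>)"
    by (simp add: algebra_simps)
  also have "\<dots> = of_real F" using trace_eq fro_eq by simp
  finally show "T 0 1 0 1 = of_real (F / ((real n)\<^sup>2 - 1))"
    using nonzero by (simp add: \<gamma>_def field_simps power2_eq_square)
  show "T 0 0 1 1 = - T 0 1 0 1 / of_nat n"
    using trace_eq n by (simp add: \<beta>_def \<gamma>_def field_simps eq_neg_iff_add_eq_0)
qed

lemma invariant_tensor_contraction:
  fixes X :: "nat \<Rightarrow> nat \<Rightarrow> complex" and F :: real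
  assumes "unitarily_invariant n T" and n: "2 \<le> n"
    and "(\<Sum>a<n. T a a 0 0) = 0" and "(\<Sum>a<n. \<Sum>b<n. T a b a b) = of_real F"
  shows "(\<Sum>a<n. \<Sum>b<n. \<Sum>c<n. \<Sum>d<n. X b a * cnj (X d c) * T a b c d) =
     of_real (F / ((real n)\<^sup>2 - 1) * (\<Sum>a<n. \<Sum>b<n. (cmod (X b a))\<^sup>2)
              - F / (real n * ((real n)\<^sup>2 - 1)) * (cmod (\<Sum>a<n. X a a))\<^sup>2)"
proof -
  have "n\<^sup>2 \<noteq> 1" using n by (simp add: power2_eq_square)
  then have square_neq_1: "(real n)\<^sup>2 \<noteq> 1" "(of_nat n :: complex)\<^sup>2 \<noteq> 1"
    by (metis of_nat_1 of_nat_eq_iff of_nat_power)+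
  have "(\<Sum>a<n. \<Sum>b<n. \<Sum>c<n. \<Sum>d<n. X b a * cnj (X d c) * T a b c d)
      = (\<Sum>a<n. \<Sum>b<n. \<Sum>c<n. \<Sum>d<n. X b a * cnj (X d c) *
           ((if a = b \<and> c = d then T 0 0 1 1 else 0) + (if a = c \<and> b = d then T 0 1 0 1 else 0)))"
    by (intro sum.cong refl) (simp add: invariant_tensor_form[OF assms(1) n])
  also have "\<dots> = T 0 0 1 1 * of_real ((cmod (\<Sum>a<n. X a a))\<^sup>2)
      + T 0 1 0 1 * of_real (\<Sum>a<n. \<Sum>b<n. (cmod (X b a))\<^sup>2)"
    by (rule contraction_delta_tensor)
  also have "\<dots> = of_real (F / ((real n)\<^sup>2 - 1) * (\<Sum>a<n. \<Sum>b<n. (cmod (X b a))\<^sup>2)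
              - F / (real n * ((real n)\<^sup>2 - 1)) * (cmod (\<Sum>a<n. X a a))\<^sup>2)"
    unfolding invariant_tensor_coefficients[OF assms] using n square_neq_1 by (simp add: divide_simps)
  finally show ?thesis .
qed

section \<open>Second moments over the Haar measure\<close>

lemma borel_measurable_cnj [measurable (raw)]:
  "f \<in> borel_measurable M \<Longrightarrow> (\<lambda>x. cnj (f x)) \<in> borel_measurable M"
  by (rule borel_measurable_continuous_on[OF linear_continuous_on[OF bounded_linear_cnj]])

lemma integral_sum_lessThan4:
  fixes f :: "nat \<Rightarrow> nat \<Rightarrow> nat \<Rightarrow> nat \<Rightarrow> 'a \<Rightarrow> complex"
  assumes "\<And>a b c d. a < n \<Longrightarrow> b < n \<Longrightarrow> c < n \<Longrightarrow> d < n \<Longrightarrow> integrable M (f a b c d)"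
  shows "(\<integral>U. (\<Sum>a<n. \<Sum>b<n. \<Sum>c<n. \<Sum>d<n. f a b c d U) \<partial>M) = (\<Sum>a<n. \<Sum>b<n. \<Sum>c<n. \<Sum>d<n. \<integral>U. f a b c d U \<partial>M)"
proof -
  have "integrable M (\<lambda>U. \<Sum>d<n. f a b c d U)" if "a < n" "b < n" "c < n" for a b c
    using that assms by (intro Bochner_Integration.integrable_sum) auto
  moreover have "integrable M (\<lambda>U. \<Sum>c<n. \<Sum>d<n. f a b c d U)" if "a < n" "b < n" for a b
    using that assms by (intro Bochner_Integration.integrable_sum) auto
  moreover have "integrable M (\<lambda>U. \<Sum>b<n. \<Sum>c<n. \<Sum>d<n. f a b c d U)" if "a < n" for a
    using that assms by (intro Bochner_Integration.integrable_sum) auto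
  ultimately show ?thesis using assms by (simp add: Bochner_Integration.integral_sum)
qed

lemma sum_product_lessThan2:
  fixes f g :: "nat \<Rightarrow> nat \<Rightarrow> 'a::comm_semiring_0"
  shows "(\<Sum>a<n. \<Sum>b<n. f a b) * (\<Sum>c<n. \<Sum>d<n. g c d) = (\<Sum>a<n. \<Sum>b<n. \<Sum>c<n. \<Sum>d<n. f a b * g c d)"
  unfolding sum_distrib_right by (simp only: sum_distrib_left)

lemma mat_space_generator_subset:
  "{{A \<in> carrier_mat n n. A $$ (i,j) \<in> B} | i j B. i < n \<and> j < n \<and> B \<in> sets borel} \<subseteq> Pow (carrier_mat n n)"
  by auto

lemma space_mat_space [simp]: "space (mat_space n) = carrier_mat n n"
  unfolding mat_space_def by (rule space_measure_of[OF mat_space_generator_subset])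

lemma measurable_mat_entry [measurable]:
  assumes "i < n" "j < n"
  shows "(\<lambda>U. U $$ (i,j)) \<in> borel_measurable (mat_space n)"
proof (rule measurableI)
  fix B :: "complex set" assume "B \<in> sets borel"
  then have "{A \<in> carrier_mat n n. A $$ (i,j) \<in> B} \<in> sets (mat_space n)"
    unfolding mat_space_def sets_measure_of[OF mat_space_generator_subset]
    using assms by (intro sigma_sets.Basic) blast
  then show "(\<lambda>U. U $$ (i,j)) -` B \<inter> space (mat_space n) \<in> sets (mat_space n)"
    by (simp add: Int_def conj_commute)
qed simp

lemma measurable_mult_mat_left:
  assumes V: "V \<in> carrier_mat n n"
  shows "(\<lambda>U. V * U) \<in> measurable (mat_space n) (mat_space n)"
  unfolding mat_space_def[of n, THEN arg_cong[where f = "measurable _"]]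
proof (rule measurable_measure_of[OF mat_space_generator_subset])
  show "(*) V \<in> space (mat_space n) \<rightarrow> carrier_mat n n" using V by auto
next
  fix Y :: "complex mat set"
  assume "Y \<in> {{A \<in> carrier_mat n n. A $$ (i,j) \<in> B} | i j B. i < n \<and> j < n \<and> B \<in> sets borel}"
  then obtain i j B where Y: "Y = {A \<in> carrier_mat n n. A $$ (i,j) \<in> B}" "i < n" "j < n" "B \<in> sets borel"
    by blast
  have entry: "(\<lambda>U. \<Sum>k<n. V $$ (i,k) * U $$ (k,j)) \<in> borel_measurable (mat_space n)"
    using Y(3) by measurable
  have "(*) V -` Y \<inter> space (mat_space n) = (\<lambda>U. \<Sum>k<n. V $$ (i,k) * U $$ (k,j)) -` B \<inter> space (mat_space n)"
    using Y V by (auto simp: index_mult_mat_lessThan[OF V])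
  also have "\<dots> \<in> sets (mat_space n)" using measurable_sets[OF entry Y(4)] .
  finally show "(*) V -` Y \<inter> space (mat_space n) \<in> sets (mat_space n)" .
qed

text \<open>The entry \<open>(U Y U\<^sup>\<dagger>)\<^sub>a\<^sub>b\<close>; matrices enter as entry functions, so that the
  dimension is carried by the summation range only.\<close>
definition sandwich :: "nat \<Rightarrow> (nat \<Rightarrow> nat \<Rightarrow> complex) \<Rightarrow> complex mat \<Rightarrow> nat \<Rightarrow> nat \<Rightarrow> complex" where
  "sandwich n Y U a b = (\<Sum>p<n. \<Sum>q<n. U $$ (a,p) * Y p q * cnj (U $$ (b,q)))"

lemma measurable_sandwich [measurable]:
  "a < n \<Longrightarrow> b < n \<Longrightarrow> (\<lambda>U. sandwich n Y U a b) \<in> borel_measurable (mat_space n)"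
  unfolding sandwich_def by measurable

lemma sandwich_eq_index_mult:
  assumes U: "U \<in> carrier_mat n n" and "a < n" "b < n"
  shows "sandwich n Y U a b = (U * mat n n (case_prod Y) * adj U) $$ (a,b)"
proof -
  have "(U * mat n n (case_prod Y) * adj U) $$ (a,b)
      = (\<Sum>q<n. (\<Sum>p<n. U $$ (a,p) * Y p q) * cnj (U $$ (b,q)))"
    using assms by (auto intro!: sum.cong simp: index_mult_mat_lessThan[of _ n n _ n])
  also have "\<dots> = sandwich n Y U a b"
    unfolding sandwich_def by (subst sum.swap) (simp add: sum_distrib_right)
  finally show ?thesis by simp
qed

lemma sandwich_mult_left:
  assumes U: "U \<in> carrier_mat n n" and V: "V \<in> carrier_mat n n" and ab: "a < n" "b < n"
  shows "sandwich n Y (V * U) a b = (\<Sum>s<n. V $$ (a,s) * (\<Sum>t<n. cnj (V $$ (b,t)) * sandwich n Y U s t))"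
proof -
  let ?Y = "mat n n (case_prod Y)"
  let ?M = "U * ?Y * adj U"
  have M: "?M \<in> carrier_mat n n" using U by auto
  have "V * U * ?Y * adj (V * U) = V * ?M * adj V"
    using U V
    by (simp add: adj_mult_mat[OF V U] assoc_mult_mat[of _ n n _ n _ n] mult_carrier_mat[of _ n n _ n])
  then have "sandwich n Y (V * U) a b = (V * ?M * adj V) $$ (a,b)"
    using U V ab by (simp add: sandwich_eq_index_mult)
  also have "\<dots> = (\<Sum>t<n. (\<Sum>s<n. V $$ (a,s) * sandwich n Y U s t) * cnj (V $$ (b,t)))"
    using U V M ab
    by (auto intro!: sum.cong simp: index_mult_mat_lessThan[of _ n n _ n] sandwich_eq_index_mult)
  also have "\<dots> = (\<Sum>s<n. V $$ (a,s) * (\<Sum>t<n. cnj (V $$ (b,t)) * sandwich n Y U s t))"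
    unfolding sum_distrib_left sum_distrib_right by (subst sum.swap) (simp add: mult_ac)
  finally show ?thesis .
qed

lemma sum_sandwich_diag:
  assumes U: "unitary_mat n U"
  shows "(\<Sum>a<n. sandwich n Y U a a) = (\<Sum>p<n. Y p p)"
proof -
  let ?Y = "mat n n (case_prod Y)"
  have Uc: "U \<in> carrier_mat n n" using U by (rule unitary_mat_carrier)
  have "(\<Sum>a<n. sandwich n Y U a a) = mtrace (U * (?Y * adj U))"
    unfolding mtrace_def using Uc
    by (auto intro!: sum.cong simp: sandwich_eq_index_mult assoc_mult_mat[of _ n n _ n _ n])
  also have "\<dots> = mtrace (?Y * (adj U * U))"
    using Uc by (subst mtrace_mult_comm[of _ n n]) (auto simp: assoc_mult_mat[of _ n n _ n _ n])
  also have "\<dots> = (\<Sum>p<n. Y p p)"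
    by (simp add: unitary_mat_adj_mult[OF U] mtrace_def)
  finally show ?thesis .
qed

lemma sum_norm_sandwich:
  assumes U: "unitary_mat n U"
  shows "(\<Sum>a<n. \<Sum>b<n. (cmod (sandwich n Y U a b))\<^sup>2) = (\<Sum>p<n. \<Sum>q<n. (cmod (Y p q))\<^sup>2)"
proof -
  let ?Y = "mat n n (case_prod Y)"
  have Uc: "U \<in> carrier_mat n n" using U by (rule unitary_mat_carrier)
  have Y: "?Y \<in> carrier_mat n n" by simp
  have M: "U * ?Y * adj U \<in> carrier_mat n n" using Uc by auto
  have "(\<Sum>a<n. \<Sum>b<n. (cmod (sandwich n Y U a b))\<^sup>2)
      = (\<Sum>a<n. \<Sum>b<n. (cmod ((U * ?Y * adj U) $$ (a,b)))\<^sup>2)"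
    using Uc by (intro sum.cong refl) (simp add: sandwich_eq_index_mult)
  then have "of_real (\<Sum>a<n. \<Sum>b<n. (cmod (sandwich n Y U a b))\<^sup>2)
      = mtrace ((U * ?Y * adj U) * adj (U * ?Y * adj U))"
    by (simp only: mtrace_mult_adj[OF M])
  also have "adj (U * ?Y * adj U) = U * (adj ?Y * adj U)"
    using Uc by (simp add: adj_mult_mat[of "U * ?Y" n n "adj U" n] adj_mult_mat[of U n n ?Y n])
  also have "(U * ?Y * adj U) * (U * (adj ?Y * adj U)) = (U * ?Y) * (adj ?Y * adj U)"
    using Uc unitary_mat_adj_mult[OF U] by (intro mult_mat_inverse_cancel) auto
  also have "\<dots> = U * (?Y * (adj ?Y * adj U))"
    using Uc by (intro assoc_mult_mat) auto
  also have "?Y * (adj ?Y * adj U) = (?Y * adj ?Y) * adj U"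
    using Uc by (intro assoc_mult_mat[symmetric]) auto
  also have "mtrace (U * ((?Y * adj ?Y) * adj U)) = mtrace ((?Y * adj ?Y) * adj U * U)"
    using Uc by (intro mtrace_mult_comm) auto
  also have "(?Y * adj ?Y) * adj U * U = (?Y * adj ?Y) * (adj U * U)"
    using Uc by (intro assoc_mult_mat) auto
  also have "mtrace \<dots> = mtrace (?Y * adj ?Y)"
    by (simp add: unitary_mat_adj_mult[OF U])
  also have "\<dots> = of_real (\<Sum>p<n. \<Sum>q<n. (cmod (Y p q))\<^sup>2)"
    by (simp add: mtrace_mult_adj[OF Y])
  finally show ?thesis by (simp only: of_real_eq_iff)
qed

lemma norm_sandwich_le:
  assumes "unitary_mat n U" "a < n" "b < n"
  shows "cmod (sandwich n Y U a b) \<le> (\<Sum>p<n. \<Sum>q<n. cmod (Y p q))"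
proof -
  have "cmod (sandwich n Y U a b) \<le> (\<Sum>p<n. \<Sum>q<n. cmod (U $$ (a,p) * Y p q * cnj (U $$ (b,q))))"
    unfolding sandwich_def by (rule order_trans[OF norm_sum sum_mono[OF norm_sum]])
  also have "\<dots> \<le> (\<Sum>p<n. \<Sum>q<n. cmod (Y p q))"
  proof (intro sum_mono)
    fix p q assume "p \<in> {..<n}" "q \<in> {..<n}"
    then have "cmod (U $$ (a,p)) * cmod (U $$ (b,q)) \<le> 1"
      using assms unitary_entry_norm_le_1 by (intro mult_le_one) auto
    then have "cmod (Y p q) * (cmod (U $$ (a,p)) * cmod (U $$ (b,q))) \<le> cmod (Y p q)"
      by (intro mult_right_le_one_le) auto
    then show "cmod (U $$ (a,p) * Y p q * cnj (U $$ (b,q))) \<le> cmod (Y p q)"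
      by (simp add: norm_mult ac_simps)
  qed
  finally show ?thesis .
qed

definition second_moment ::
  "nat \<Rightarrow> (nat \<Rightarrow> nat \<Rightarrow> complex) \<Rightarrow> complex mat measure \<Rightarrow> nat \<Rightarrow> nat \<Rightarrow> nat \<Rightarrow> nat \<Rightarrow> complex" where
  "second_moment n Y M a b c d = (\<integral>U. sandwich n Y U a b * cnj (sandwich n Y U c d) \<partial>M)"

text \<open>\<open>trace_form n X Y U = Tr (X U Y U\<^sup>\<dagger>)\<close>.\<close>
definition trace_form ::
  "nat \<Rightarrow> (nat \<Rightarrow> nat \<Rightarrow> complex) \<Rightarrow> (nat \<Rightarrow> nat \<Rightarrow> complex) \<Rightarrow> complex mat \<Rightarrow> complex" where
  "trace_form n X Y U = (\<Sum>a<n. \<Sum>b<n. X b a * sandwich n Y U a b)"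

context
  fixes n :: nat and H :: "complex mat measure"
  assumes haar: "haar_unitary n H"
begin

lemma haar_prob_space: "prob_space H"
  using haar by (simp add: haar_unitary_def)

lemma sets_haar: "sets H = sets (mat_space n)"
  using haar by (simp add: haar_unitary_def)

lemma space_haar: "space H = carrier_mat n n"
  using sets_eq_imp_space_eq[OF sets_haar] by simp

lemma measurable_haar_iff: "f \<in> measurable H N \<longleftrightarrow> f \<in> measurable (mat_space n) N"
  by (simp only: measurable_cong_sets[OF sets_haar refl])

lemma AE_haar_unitary: "AE U in H. unitary_mat n U"
  using haar by (simp add: haar_unitary_def)

lemma integrable_sandwich_product:
  assumes "a < n" "b < n" "c < n" "d < n"
  shows "integrable H (\<lambda>U. sandwich n Y U a b * cnj (sandwich n Y U c d))"
proof -
  interpret prob_space H by (rule haar_prob_space)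
  let ?B = "(\<Sum>p<n. \<Sum>q<n. cmod (Y p q)) * (\<Sum>p<n. \<Sum>q<n. cmod (Y p q))"
  show ?thesis
  proof (rule integrable_const_bound[where B = ?B])
    show "AE U in H. norm (sandwich n Y U a b * cnj (sandwich n Y U c d)) \<le> ?B"
      using AE_haar_unitary
    proof eventually_elim
      case (elim U)
      then show ?case
        using norm_sandwich_le[OF elim, of a b Y] norm_sandwich_le[OF elim, of c d Y] assms
        by (simp add: norm_mult) (rule mult_mono, auto intro!: sum_nonneg)
    qed
  qed (use assms in \<open>simp add: measurable_haar_iff\<close>)
qed

lemma integral_haar_left_translate:
  fixes f :: "complex mat \<Rightarrow> complex"
  assumes V: "unitary_mat n V" and f: "f \<in> borel_measurable (mat_space n)"
  shows "(\<integral>U. f (V * U) \<partial>H) = (\<integral>U. f U \<partial>H)"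
proof -
  have "(\<lambda>U. V * U) \<in> measurable H (mat_space n)"
    using measurable_mult_mat_left[OF unitary_mat_carrier[OF V]] by (simp add: measurable_haar_iff)
  then have "(\<integral>U. f (V * U) \<partial>H) = integral\<^sup>L (distr H (mat_space n) (\<lambda>U. V * U)) f"
    using f by (simp add: integral_distr)
  then show ?thesis using haar V by (simp add: haar_unitary_def)
qed

lemma second_moment_unitarily_invariant: "unitarily_invariant n (second_moment n Y H)"
  unfolding unitarily_invariant_def
proof (intro allI impI)
  fix V i j k l assume V: "unitary_mat n V" and ijkl: "i < n" "j < n" "k < n" "l < n"
  have Vc: "V \<in> carrier_mat n n" using V by (rule unitary_mat_carrier)
  let ?c = "\<lambda>a b c d. V $$ (i,a) * cnj (V $$ (j,b)) * cnj (V $$ (k,c)) * V $$ (l,d)"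
  let ?m = "\<lambda>a b c d U. sandwich n Y U a b * cnj (sandwich n Y U c d)"
  have "second_moment n Y H i j k l = (\<integral>U. ?m i j k l (V * U) \<partial>H)"
    unfolding second_moment_def using ijkl
    by (intro integral_haar_left_translate[symmetric] V) measurable
  also have "\<dots> = (\<integral>U. (\<Sum>a<n. \<Sum>b<n. \<Sum>c<n. \<Sum>d<n. ?c a b c d * ?m a b c d U) \<partial>H)"
  proof (intro Bochner_Integration.integral_cong refl)
    fix U assume "U \<in> space H"
    then have "U \<in> carrier_mat n n" by (simp add: space_haar)
    then have "sandwich n Y (V * U) i j
         = (\<Sum>a<n. \<Sum>b<n. V $$ (i,a) * cnj (V $$ (j,b)) * sandwich n Y U a b)"
      and "cnj (sandwich n Y (V * U) k l)
         = (\<Sum>c<n. \<Sum>d<n. cnj (V $$ (k,c)) * V $$ (l,d) * cnj (sandwich n Y U c d))"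
      using ijkl Vc by (simp_all add: sandwich_mult_left sum_distrib_left mult.assoc)
    then show "?m i j k l (V * U) = (\<Sum>a<n. \<Sum>b<n. \<Sum>c<n. \<Sum>d<n. ?c a b c d * ?m a b c d U)"
      by (simp only: sum_product_lessThan2) (simp add: mult_ac)
  qed
  also have "\<dots> = (\<Sum>a<n. \<Sum>b<n. \<Sum>c<n. \<Sum>d<n. ?c a b c d * second_moment n Y H a b c d)"
    unfolding second_moment_def
    by (subst integral_sum_lessThan4) (auto intro: integrable_sandwich_product)
  also have "\<dots> = (\<Sum>a<n. V $$ (i,a) * (\<Sum>b<n. cnj (V $$ (j,b)) * (\<Sum>c<n. cnj (V $$ (k,c)) *
        (\<Sum>d<n. V $$ (l,d) * second_moment n Y H a b c d))))"
    by (simp add: sum_distrib_left mult_ac)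
  finally show "second_moment n Y H i j k l = \<dots>" .
qed

lemma second_moment_trace:
  assumes "(\<Sum>p<n. Y p p) = 0" and "0 < n"
  shows "(\<Sum>a<n. second_moment n Y H a a 0 0) = 0"
proof -
  have "(\<Sum>a<n. second_moment n Y H a a 0 0)
      = (\<integral>U. (\<Sum>a<n. sandwich n Y U a a) * cnj (sandwich n Y U 0 0) \<partial>H)"
    unfolding second_moment_def sum_distrib_right
    using assms(2)
    by (intro Bochner_Integration.integral_sum[symmetric] integrable_sandwich_product) auto
  also have "\<dots> = (\<integral>U. 0 \<partial>H)"
    using AE_haar_unitary assms(2)
    by (intro integral_cong_AE) (auto simp: measurable_haar_iff sum_sandwich_diag assms(1))
  finally show ?thesis by simp
qed

lemma second_moment_frobenius:
  "(\<Sum>a<n. \<Sum>b<n. second_moment n Y H a b a b) = of_real (\<Sum>p<n. \<Sum>q<n. (cmod (Y p q))\<^sup>2)"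
proof -
  interpret prob_space H by (rule haar_prob_space)
  have "integrable H (\<lambda>U. \<Sum>b<n. sandwich n Y U a b * cnj (sandwich n Y U a b))" if "a < n" for a
    using that by (intro Bochner_Integration.integrable_sum integrable_sandwich_product) auto
  then have "(\<Sum>a<n. \<Sum>b<n. second_moment n Y H a b a b)
      = (\<integral>U. (\<Sum>a<n. \<Sum>b<n. sandwich n Y U a b * cnj (sandwich n Y U a b)) \<partial>H)"
    unfolding second_moment_def
    by (simp add: Bochner_Integration.integral_sum integrable_sandwich_product)
  also have "\<dots> = (\<integral>U. of_real (\<Sum>a<n. \<Sum>b<n. (cmod (sandwich n Y U a b))\<^sup>2) \<partial>H)"
    by (simp add: complex_norm_square del: of_real_power)
  also have "\<dots> = (\<integral>U. of_real (\<Sum>p<n. \<Sum>q<n. (cmod (Y p q))\<^sup>2) \<partial>H)"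
    using AE_haar_unitary
    by (intro integral_cong_AE)
      (auto simp: measurable_haar_iff sum_norm_sandwich simp del: of_real_sum of_real_power)
  finally show ?thesis by (simp add: prob_space)
qed

lemma haar_second_moment_trace_form:
  fixes X Y :: "nat \<Rightarrow> nat \<Rightarrow> complex"
  assumes "2 \<le> n" and "(\<Sum>p<n. Y p p) = 0"
  shows "(\<integral>U. trace_form n X Y U * cnj (trace_form n X Y U) \<partial>H) =
     of_real ((\<Sum>p<n. \<Sum>q<n. (cmod (Y p q))\<^sup>2) / ((real n)\<^sup>2 - 1) * (\<Sum>a<n. \<Sum>b<n. (cmod (X b a))\<^sup>2)
       - (\<Sum>p<n. \<Sum>q<n. (cmod (Y p q))\<^sup>2) / (real n * ((real n)\<^sup>2 - 1)) * (cmod (\<Sum>a<n. X a a))\<^sup>2)"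
proof -
  have "trace_form n X Y U * cnj (trace_form n X Y U) = (\<Sum>a<n. \<Sum>b<n. \<Sum>c<n. \<Sum>d<n.
      X b a * cnj (X d c) * (sandwich n Y U a b * cnj (sandwich n Y U c d)))" for U
    unfolding trace_form_def cnj_sum complex_cnj_mult sum_product_lessThan2 by (simp add: mult_ac)
  then have "(\<integral>U. trace_form n X Y U * cnj (trace_form n X Y U) \<partial>H)
      = (\<Sum>a<n. \<Sum>b<n. \<Sum>c<n. \<Sum>d<n. X b a * cnj (X d c) * second_moment n Y H a b c d)"
    unfolding second_moment_def
    by (simp only:) (subst integral_sum_lessThan4, auto intro: integrable_sandwich_product)
  then show ?thesis
    using assms by (simp only:) (intro invariant_tensor_contraction second_moment_unitarily_invariant
        second_moment_trace second_moment_frobenius, auto)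
qed

end

section \<open>Transfer to unitary 2-designs\<close>

lemma sum_product_lessThan4:
  fixes A B :: "nat \<Rightarrow> nat \<Rightarrow> nat \<Rightarrow> nat \<Rightarrow> 'a::comm_semiring_0"
  shows "(\<Sum>a<n. \<Sum>b<n. \<Sum>p<n. \<Sum>q<n. A a b p q) * (\<Sum>a<n. \<Sum>b<n. \<Sum>p<n. \<Sum>q<n. B a b p q) =
    (\<Sum>a<n. \<Sum>b<n. \<Sum>p<n. \<Sum>q<n. \<Sum>a'<n. \<Sum>b'<n. \<Sum>p'<n. \<Sum>q'<n. A a b p q * B a' b' p' q')"
  unfolding sum_distrib_right by (simp only: sum_distrib_left)

lemma trace_form_times_cnj:
  "trace_form n X Y U * cnj (trace_form n X Y U) =
   (\<Sum>a<n. \<Sum>b<n. \<Sum>p<n. \<Sum>q<n. \<Sum>a'<n. \<Sum>b'<n. \<Sum>p'<n. \<Sum>q'<n.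
      (X b a * Y p q * cnj (X b' a') * cnj (Y p' q')) * monomial [(a,p),(b',q')] [(b,q),(a',p')] U)"
proof -
  have "trace_form n X Y U = (\<Sum>a<n. \<Sum>b<n. \<Sum>p<n. \<Sum>q<n. X b a * Y p q * (U $$ (a,p) * cnj (U $$ (b,q))))"
    unfolding trace_form_def sandwich_def by (simp add: sum_distrib_left mult_ac)
  then show ?thesis
    by (simp only: cnj_sum complex_cnj_mult complex_cnj_cnj sum_product_lessThan4)
      (simp add: monomial_def mult_ac)
qed

definition same_expectation :: "'a measure \<Rightarrow> 'a measure \<Rightarrow> ('a \<Rightarrow> complex) \<Rightarrow> bool" where
  "same_expectation M N f \<longleftrightarrow> integrable M f \<and> integrable N f \<and> (\<integral>x. f x \<partial>M) = (\<integral>x. f x \<partial>N)"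

lemma same_expectation_sum:
  "(\<And>i. i \<in> I \<Longrightarrow> same_expectation M N (f i)) \<Longrightarrow> same_expectation M N (\<lambda>x. \<Sum>i\<in>I. f i x)"
  unfolding same_expectation_def
  by (auto simp: Bochner_Integration.integral_sum intro!: Bochner_Integration.integrable_sum sum.cong)

lemma same_expectation_cmult: "same_expectation M N f \<Longrightarrow> same_expectation M N (\<lambda>x. c * f x)"
  unfolding same_expectation_def by auto

lemma norm_prod_list_le_1:
  fixes f :: "'a \<Rightarrow> 'b::real_normed_div_algebra"
  shows "(\<And>k. k \<in> set ks \<Longrightarrow> norm (f k) \<le> 1) \<Longrightarrow> norm (\<Prod>k\<leftarrow>ks. f k) \<le> 1"
  by (induction ks) (auto simp: norm_mult intro: mult_le_one)

lemma measurable_monomial: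
  "set ks \<union> set ls \<subseteq> {..<n} \<times> {..<n} \<Longrightarrow> monomial ks ls \<in> borel_measurable (mat_space n)"
proof -
  have "set ks \<subseteq> {..<n} \<times> {..<n} \<Longrightarrow> (\<lambda>U. \<Prod>k\<leftarrow>ks. f (U $$ k)) \<in> borel_measurable (mat_space n)"
    if "f \<in> borel_measurable borel" for f :: "complex \<Rightarrow> complex" and ks
    using that by (induction ks) auto
  from this[of "\<lambda>z. z" ks] this[of cnj ls]
  show "set ks \<union> set ls \<subseteq> {..<n} \<times> {..<n} \<Longrightarrow> monomial ks ls \<in> borel_measurable (mat_space n)"
    unfolding monomial_def by (intro borel_measurable_times) auto
qed

lemma unitary_2_design_same_expectation_monomial:
  assumes design: "\<forall>ks ls. length ks \<le> 2 \<and> length ls \<le> 2 \<and> set ks \<union> set ls \<subseteq> {..<n} \<times> {..<n} \<longrightarrow>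
           integrable \<mu> (monomial ks ls) \<and> (\<integral>U. monomial ks ls U \<partial>\<mu>) = (\<integral>U. monomial ks ls U \<partial>H)"
    and haar: "haar_unitary n H"
    and ks: "length ks \<le> 2" "length ls \<le> 2" "set ks \<union> set ls \<subseteq> {..<n} \<times> {..<n}"
  shows "same_expectation \<mu> H (monomial ks ls)"
proof -
  interpret prob_space H by (rule haar_prob_space[OF haar])
  have "integrable H (monomial ks ls)"
  proof (rule integrable_const_bound[where B = 1])
    show "AE U in H. norm (monomial ks ls U) \<le> 1"
      using AE_haar_unitary[OF haar]
    proof eventually_elim
      case (elim U)
      have "norm (\<Prod>k\<leftarrow>ks. U $$ k) \<le> 1" "norm (\<Prod>l\<leftarrow>ls. cnj (U $$ l)) \<le> 1"
        using ks unitary_entry_norm_le_1[OF elim] by (auto intro!: norm_prod_list_le_1)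
      then show ?case
        unfolding monomial_def norm_mult by (intro mult_le_one) auto
    qed
    show "monomial ks ls \<in> borel_measurable H"
      using ks(3) unfolding measurable_haar_iff[OF haar] by (rule measurable_monomial)
  qed
  then show ?thesis using design ks unfolding same_expectation_def by auto
qed

lemma unitary_2_design_expectation_trace_form:
  fixes X Y :: "nat \<Rightarrow> nat \<Rightarrow> complex"
  assumes design: "unitary_2_design n \<mu>" and n: "0 < n" and tr: "(\<Sum>p<n. Y p p) = 0"
  shows "integrable \<mu> (\<lambda>U. trace_form n X Y U * cnj (trace_form n X Y U))"
    and "Re (\<integral>U. trace_form n X Y U * cnj (trace_form n X Y U) \<partial>\<mu>)
           \<le> 2 * (\<Sum>p<n. \<Sum>q<n. (cmod (Y p q))\<^sup>2) * (\<Sum>a<n. \<Sum>b<n. (cmod (X b a))\<^sup>2) / (real n)\<^sup>2"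
proof -
  let ?Q = "\<lambda>U. trace_form n X Y U * cnj (trace_form n X Y U)"
  let ?FY = "\<Sum>p<n. \<Sum>q<n. (cmod (Y p q))\<^sup>2" and ?FX = "\<Sum>a<n. \<Sum>b<n. (cmod (X b a))\<^sup>2"
  obtain H where haar: "haar_unitary n H"
    and moments: "\<forall>ks ls. length ks \<le> 2 \<and> length ls \<le> 2 \<and> set ks \<union> set ls \<subseteq> {..<n} \<times> {..<n} \<longrightarrow>
           integrable \<mu> (monomial ks ls) \<and> (\<integral>U. monomial ks ls U \<partial>\<mu>) = (\<integral>U. monomial ks ls U \<partial>H)"
    using design unfolding unitary_2_design_def by blast
  have "same_expectation \<mu> H ?Q"
    unfolding trace_form_times_cnj
    by (intro same_expectation_sum same_expectation_cmult
        unitary_2_design_same_expectation_monomial[OF moments haar]) auto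
  then have "integrable \<mu> ?Q" and same: "(\<integral>U. ?Q U \<partial>\<mu>) = (\<integral>U. ?Q U \<partial>H)"
    unfolding same_expectation_def by auto
  then show "integrable \<mu> ?Q" by simp
  have "0 \<le> ?FY" "0 \<le> ?FX" by (auto intro!: sum_nonneg)
  show "Re (\<integral>U. ?Q U \<partial>\<mu>) \<le> 2 * ?FY * ?FX / (real n)\<^sup>2"
  proof (cases "n = 1")
    case True
    then have "trace_form n X Y U = 0" for U
      using tr by (simp add: trace_form_def sandwich_def)
    then show ?thesis using \<open>0 \<le> ?FY\<close> \<open>0 \<le> ?FX\<close> by simp
  next
    case False
    with n have n2: "2 \<le> n" by simp
    then have "(real n)\<^sup>2 \<le> 2 * ((real n)\<^sup>2 - 1)" "1 < (real n)\<^sup>2"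
      using mult_mono[of 2 "real n" 2 "real n"] by (auto simp: power2_eq_square)
    then have "1 / ((real n)\<^sup>2 - 1) \<le> 2 / (real n)\<^sup>2"
      by (simp add: divide_simps)
    then have "(?FY * ?FX) * (1 / ((real n)\<^sup>2 - 1)) \<le> (?FY * ?FX) * (2 / (real n)\<^sup>2)"
      using \<open>0 \<le> ?FY\<close> \<open>0 \<le> ?FX\<close> by (intro mult_left_mono) auto
    then have "?FY / ((real n)\<^sup>2 - 1) * ?FX \<le> 2 * ?FY * ?FX / (real n)\<^sup>2"
      by (simp add: ac_simps)
    moreover have "0 \<le> ?FY / (real n * ((real n)\<^sup>2 - 1)) * (cmod (\<Sum>a<n. X a a))\<^sup>2"
      using \<open>0 \<le> ?FY\<close> \<open>1 < (real n)\<^sup>2\<close> by simp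
    ultimately show ?thesis
      unfolding same haar_second_moment_trace_form[OF haar n2, of Y X, OF tr] by simp
  qed
qed

section \<open>Operator norm and Kronecker products\<close>

lemma norm_index_le_vnorm: "j < dim_vec x \<Longrightarrow> cmod (x $ j) \<le> vnorm x"
  unfolding vnorm_def by (intro real_le_rsqrt member_le_sum) auto

lemma vnorm_unit_vec: "j < m \<Longrightarrow> vnorm (unit_vec m j) = 1"
  unfolding vnorm_def by (simp add: if_distrib[of "\<lambda>z. (cmod z)\<^sup>2"] cong: if_cong)

lemma bdd_above_opnorm:
  "bdd_above {vnorm (A *\<^sub>v x) | x. x \<in> carrier_vec (dim_col A) \<and> vnorm x = 1}"
proof (rule bdd_aboveI)
  let ?B = "sqrt (\<Sum>i<dim_row A. (\<Sum>j<dim_col A. cmod (A $$ (i,j)))\<^sup>2)"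
  fix y assume "y \<in> {vnorm (A *\<^sub>v x) | x. x \<in> carrier_vec (dim_col A) \<and> vnorm x = 1}"
  then obtain x where x: "x \<in> carrier_vec (dim_col A)" "vnorm x = 1" "y = vnorm (A *\<^sub>v x)" by blast
  have "cmod ((A *\<^sub>v x) $ i) \<le> (\<Sum>j<dim_col A. cmod (A $$ (i,j)))" if "i < dim_row A" for i
  proof -
    have "(A *\<^sub>v x) $ i = (\<Sum>j<dim_col A. A $$ (i,j) * x $ j)"
      using that x by (auto simp: scalar_prod_def atLeast0LessThan intro!: sum.cong)
    also have "cmod \<dots> \<le> (\<Sum>j<dim_col A. cmod (A $$ (i,j)) * cmod (x $ j))"
      by (rule order_trans[OF norm_sum]) (simp add: norm_mult)
    also have "\<dots> \<le> (\<Sum>j<dim_col A. cmod (A $$ (i,j)))"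
      using x norm_index_le_vnorm[of _ x] by (intro sum_mono mult_right_le_one_le) auto
    finally show ?thesis .
  qed
  then have "(\<Sum>i<dim_row A. (cmod ((A *\<^sub>v x) $ i))\<^sup>2)
      \<le> (\<Sum>i<dim_row A. (\<Sum>j<dim_col A. cmod (A $$ (i,j)))\<^sup>2)"
    by (intro sum_mono power_mono) auto
  then show "y \<le> ?B" using x unfolding vnorm_def by simp
qed

lemma vnorm_mult_le_opnorm:
  "x \<in> carrier_vec (dim_col A) \<Longrightarrow> vnorm x = 1 \<Longrightarrow> vnorm (A *\<^sub>v x) \<le> opnorm A"
  unfolding opnorm_def by (intro cSup_upper bdd_above_opnorm) auto

lemma vnorm_nonneg: "0 \<le> vnorm x"
  by (simp add: vnorm_def sum_nonneg)

lemma opnorm_nonneg: "0 < dim_col A \<Longrightarrow> 0 \<le> opnorm A"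
  by (rule order_trans[OF vnorm_nonneg vnorm_mult_le_opnorm[OF _ vnorm_unit_vec]]) auto

lemma sum_norm_col_le_opnorm:
  assumes A: "A \<in> carrier_mat m m" and j: "j < m"
  shows "(\<Sum>i<m. (cmod (A $$ (i,j)))\<^sup>2) \<le> (opnorm A)\<^sup>2"
proof -
  have "A *\<^sub>v unit_vec m j = col A j"
    using A j by (intro eq_vecI) (auto simp: scalar_prod_def atLeast0LessThan
        if_distrib[of "\<lambda>z. _ * z"] cong: if_cong)
  moreover have "vnorm (A *\<^sub>v unit_vec m j) \<le> opnorm A"
    using A j by (intro vnorm_mult_le_opnorm vnorm_unit_vec) auto
  ultimately have "sqrt (\<Sum>i<m. (cmod (A $$ (i,j)))\<^sup>2) \<le> opnorm A"
    using A j by (simp add: vnorm_def)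
  then show ?thesis
    using power_mono[of "sqrt (\<Sum>i<m. (cmod (A $$ (i,j)))\<^sup>2)" "opnorm A" 2] by (simp add: sum_nonneg)
qed

lemma sum_lessThan_mult_split:
  fixes f :: "nat \<Rightarrow> 'a::comm_monoid_add"
  shows "(\<Sum>a<m*k. f a) = (\<Sum>i<m. \<Sum>h<k. f (i*k + h))"
proof -
  have "(\<Sum>a\<in>{i*k..<i*k+k}. f a) = (\<Sum>h<k. f (i*k + h))" for i
    using sum.shift_bounds_nat_ivl[of f 0 "i*k" k] by (simp add: atLeast0LessThan add.commute)
  then show ?thesis by (simp add: sum.nat_group[symmetric])
qed

lemma mult_add_less_mult:
  assumes "i < (m::nat)" "h < k"
  shows "i * k + h < m * k"
proof -
  have "i * k + h < Suc i * k" using assms(2) by simp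
  also have "\<dots> \<le> m * k" using assms(1) by (intro mult_le_mono1) simp
  finally show ?thesis .
qed

lemma index_kron_one_mat:
  assumes "Obj \<in> carrier_mat Dv Dv" "i < Dv * Dh" "j < Dv * Dh"
  shows "kron Obj (1\<^sub>m Dh) $$ (i,j) = (if i mod Dh = j mod Dh then Obj $$ (i div Dh, j div Dh) else 0)"
proof -
  have "0 < Dh" using assms by (cases Dh) auto
  then show ?thesis using assms unfolding kron_def by simp
qed

lemma sum_norm_kron_one_mat_le:
  assumes O: "Obj \<in> carrier_mat Dv Dv" and Dh: "0 < Dh"
  shows "(\<Sum>a<Dv*Dh. \<Sum>b<Dv*Dh. (cmod (kron Obj (1\<^sub>m Dh) $$ (b,a)))\<^sup>2) \<le> real (Dv*Dh) * (opnorm Obj)\<^sup>2"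
proof -
  have "(\<Sum>b<Dv*Dh. (cmod (kron Obj (1\<^sub>m Dh) $$ (b,a)))\<^sup>2) \<le> (opnorm Obj)\<^sup>2" if a: "a < Dv*Dh" for a
  proof -
    have "(\<Sum>b<Dv*Dh. (cmod (kron Obj (1\<^sub>m Dh) $$ (b,a)))\<^sup>2)
        = (\<Sum>i<Dv. \<Sum>h<Dh. if h = a mod Dh then (cmod (Obj $$ (i, a div Dh)))\<^sup>2 else 0)"
    proof (subst sum_lessThan_mult_split, intro sum.cong refl)
      fix i h assume "i \<in> {..<Dv}" "h \<in> {..<Dh}"
      moreover from this have "i*Dh + h < Dv*Dh" by (simp add: mult_add_less_mult)
      ultimately show "(cmod (kron Obj (1\<^sub>m Dh) $$ (i*Dh + h, a)))\<^sup>2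
          = (if h = a mod Dh then (cmod (Obj $$ (i, a div Dh)))\<^sup>2 else 0)"
        using a by (simp add: index_kron_one_mat[OF O])
    qed
    also have "\<dots> = (\<Sum>i<Dv. (cmod (Obj $$ (i, a div Dh)))\<^sup>2)"
      using Dh by simp
    also have "\<dots> \<le> (opnorm Obj)\<^sup>2"
      using a Dh by (intro sum_norm_col_le_opnorm[OF O]) (simp add: less_mult_imp_div_less)
    finally show ?thesis .
  qed
  then have "(\<Sum>a<Dv*Dh. \<Sum>b<Dv*Dh. (cmod (kron Obj (1\<^sub>m Dh) $$ (b,a)))\<^sup>2) \<le> (\<Sum>a<Dv*Dh. (opnorm Obj)\<^sup>2)"
    by (intro sum_mono) auto
  then show ?thesis by simp
qed

section \<open>The deviation as a trace form\<close>

lemma deviation_eq_sum: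
  assumes O: "Obj \<in> carrier_mat Dv Dv"
  shows "deviation Obj Dh \<rho> = (\<Sum>a<Dv*Dh. \<Sum>b<Dv*Dh. kron Obj (1\<^sub>m Dh) $$ (b,a) *
            (\<rho> $$ (a,b) - (if a = b then 1 / of_nat (Dv*Dh) else 0)))"
proof -
  let ?n = "Dv*Dh" and ?K = "kron Obj (1\<^sub>m Dh)"
  let ?M = "\<rho> - (1 / of_nat ?n) \<cdot>\<^sub>m 1\<^sub>m ?n"
  have K: "?K \<in> carrier_mat ?n ?n" using O unfolding kron_def by auto
  have M: "?M \<in> carrier_mat ?n ?n" by auto
  have "deviation Obj Dh \<rho> = (\<Sum>b<?n. (?K * ?M) $$ (b,b))"
    unfolding deviation_def mtrace_def using K O by simp
  also have "\<dots> = (\<Sum>b<?n. \<Sum>a<?n. ?K $$ (b,a) * ?M $$ (a,b))"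
    by (intro sum.cong refl index_mult_mat_lessThan[OF K M]) auto
  also have "\<dots> = (\<Sum>b<?n. \<Sum>a<?n. ?K $$ (b,a) * (\<rho> $$ (a,b) - (if a = b then 1 / of_nat ?n else 0)))"
    by (intro sum.cong refl) auto
  finally show ?thesis by (subst sum.swap)
qed

definition traceless_part :: "nat \<Rightarrow> (nat \<Rightarrow> nat \<Rightarrow> complex) \<Rightarrow> nat \<Rightarrow> nat \<Rightarrow> complex" where
  "traceless_part n K p q = K p q - (if p = q then (\<Sum>i<n. K i i) / of_nat n else 0)"

lemma trace_traceless_part: "0 < n \<Longrightarrow> (\<Sum>p<n. traceless_part n K p p) = 0"
  unfolding traceless_part_def by (simp add: sum_subtractf)

lemma sum_norm_sub_mean_le:
  fixes x :: "nat \<Rightarrow> complex"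
  assumes "0 < n"
  shows "(\<Sum>p<n. (cmod (x p - (\<Sum>i<n. x i) / of_nat n))\<^sup>2) \<le> (\<Sum>p<n. (cmod (x p))\<^sup>2)"
proof -
  define c where "c = (\<Sum>i<n. x i) / of_nat n"
  have sum_x: "(\<Sum>i<n. x i) = of_nat n * c" and "(\<Sum>i<n. cnj (x i)) = of_nat n * cnj c"
    using assms by (simp_all add: c_def flip: cnj_sum)
  have "complex_of_real (\<Sum>p<n. (cmod (x p - c))\<^sup>2) = (\<Sum>p<n. (x p - c) * cnj (x p - c))"
    by (simp only: of_real_sum complex_norm_square)
  also have "\<dots> = (\<Sum>p<n. x p * cnj (x p)) - cnj c * (\<Sum>i<n. x i) - c * (\<Sum>i<n. cnj (x i))
      + of_nat n * (c * cnj c)"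
    by (simp add: algebra_simps sum.distrib sum_subtractf sum_distrib_left)
  also have "\<dots> = complex_of_real ((\<Sum>p<n. (cmod (x p))\<^sup>2) - real n * (cmod c)\<^sup>2)"
    unfolding sum_x \<open>(\<Sum>i<n. cnj (x i)) = _\<close>
    by (simp add: complex_norm_square algebra_simps del: of_real_power)
  finally have "(\<Sum>p<n. (cmod (x p - c))\<^sup>2) = (\<Sum>p<n. (cmod (x p))\<^sup>2) - real n * (cmod c)\<^sup>2"
    by (simp only: of_real_eq_iff)
  then show ?thesis unfolding c_def[symmetric] by simp
qed

lemma sum_norm_traceless_part_le:
  assumes "0 < n"
  shows "(\<Sum>p<n. \<Sum>q<n. (cmod (traceless_part n K p q))\<^sup>2) \<le> (\<Sum>p<n. \<Sum>q<n. (cmod (K p q))\<^sup>2)"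
proof -
  let ?c = "(\<Sum>i<n. K i i) / of_nat n"
  have "(\<Sum>q<n. (cmod (traceless_part n K p q))\<^sup>2)
      = (\<Sum>q<n. (cmod (K p q))\<^sup>2) + ((cmod (K p p - ?c))\<^sup>2 - (cmod (K p p))\<^sup>2)" if p: "p < n" for p
  proof -
    have "(\<Sum>q<n. (cmod (traceless_part n K p q))\<^sup>2)
        = (cmod (K p p - ?c))\<^sup>2 + (\<Sum>q\<in>{..<n} - {p}. (cmod (K p q))\<^sup>2)"
      using p by (simp add: sum.remove[of _ p] traceless_part_def)
    also have "\<dots> = (\<Sum>q<n. (cmod (K p q))\<^sup>2) + ((cmod (K p p - ?c))\<^sup>2 - (cmod (K p p))\<^sup>2)"
      using p by (simp add: sum.remove[of _ p])
    finally show ?thesis .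
  qed
  then have "(\<Sum>p<n. \<Sum>q<n. (cmod (traceless_part n K p q))\<^sup>2)
      = (\<Sum>p<n. \<Sum>q<n. (cmod (K p q))\<^sup>2)
        + ((\<Sum>p<n. (cmod (K p p - ?c))\<^sup>2) - (\<Sum>p<n. (cmod (K p p))\<^sup>2))"
    by (simp add: sum.distrib sum_subtractf)
  then show ?thesis using sum_norm_sub_mean_le[OF assms, of "\<lambda>p. K p p"] by simp
qed

lemma sandwich_traceless_part:
  assumes "unitary_mat n U" "a < n" "b < n"
  shows "sandwich n (traceless_part n K) U a b
       = sandwich n K U a b - (if a = b then (\<Sum>i<n. K i i) / of_nat n else 0)"
proof -
  let ?c = "(\<Sum>i<n. K i i) / of_nat n"
  have "(\<Sum>p<n. \<Sum>q<n. U $$ (a,p) * (if p = q then ?c else 0) * cnj (U $$ (b,q)))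
      = ?c * (\<Sum>p<n. U $$ (a,p) * cnj (U $$ (b,p)))"
    by (simp add: if_distrib[of "\<lambda>z. _ * z"] if_distrib[of "\<lambda>z. z * _"] sum_distrib_left mult_ac
        cong: if_cong)
  then show ?thesis
    using unitary_row_inner[OF assms]
    by (simp add: sandwich_def traceless_part_def algebra_simps sum_subtractf)
qed

lemma index_rho_net:
  assumes "unitary_mat n U" "a < n" "b < n"
  shows "rho_net n U $$ (a,b) = U $$ (a,0) * cnj (U $$ (b,0))"
proof -
  have U: "U \<in> carrier_mat n n" using assms(1) by (rule unitary_mat_carrier)
  let ?P = "outer (unit_vec n 0) (unit_vec n 0)"
  have P: "?P \<in> carrier_mat n n" by (simp add: outer_def)
  have "(U * ?P) $$ (a,q) = (if q = 0 then U $$ (a,0) else 0)" if "q < n" for q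
    using U P assms that
    by (subst index_mult_mat_lessThan[OF U P])
      (auto simp: outer_def if_distrib[of "\<lambda>z. _ * z"] cong: if_cong)
  then show ?thesis
    unfolding rho_net_def using U P assms
    by (simp add: index_mult_mat_lessThan[of _ n n "adj U" n] sum_delta_mult_left)
qed

lemma deviation_rho_net:
  assumes O: "Obj \<in> carrier_mat Dv Dv" and U: "unitary_mat (Dv*Dh) U"
  shows "deviation Obj Dh (rho_net (Dv*Dh) U)
       = trace_form (Dv*Dh) (\<lambda>b a. kron Obj (1\<^sub>m Dh) $$ (b,a))
           (traceless_part (Dv*Dh) (\<lambda>p q. if p = 0 \<and> q = 0 then 1 else 0)) U"
proof -
  let ?n = "Dv*Dh"
  have "rho_net ?n U $$ (a,b) - (if a = b then 1 / of_nat ?n else 0)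
      = sandwich ?n (traceless_part ?n (\<lambda>p q. if p = 0 \<and> q = 0 then 1 else 0)) U a b"
    if "a < ?n" "b < ?n" for a b
  proof -
    have n: "0 < ?n" using that(1) by linarith
    have "sandwich ?n (\<lambda>p q. if p = 0 \<and> q = 0 then 1 else 0) U a b
        = (\<Sum>p<?n. \<Sum>q<?n. if p = 0 \<and> q = 0 then U $$ (a,p) * cnj (U $$ (b,q)) else 0)"
      unfolding sandwich_def by (intro sum.cong refl) auto
    also have "\<dots> = U $$ (a,0) * cnj (U $$ (b,0))"
      using n by (rule sum_sum_if_both_zero)
    finally have "sandwich ?n (\<lambda>p q. if p = 0 \<and> q = 0 then 1 else 0) U a b
        = U $$ (a,0) * cnj (U $$ (b,0))" .
    moreover have "(\<Sum>i<?n. if i = 0 \<and> i = 0 then 1 else 0) = (1::complex)"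
      using n by simp
    ultimately show ?thesis
      using that by (simp add: sandwich_traceless_part[OF U] index_rho_net[OF U])
  qed
  then show ?thesis
    unfolding deviation_eq_sum[OF O] trace_form_def by (intro sum.cong refl) simp
qed

lemma pow_mat_diag: "mat_diag n g ^\<^sub>m k = mat_diag n (\<lambda>l. g l ^ k)"
proof (induction k)
  case 0
  have "dim_row (mat_diag n g) = n" using mat_diag_dim by blast
  then show ?case by (simp flip: mat_diag_one)
qed (simp add: power_Suc2 del: power_Suc)

lemma pow_unitary_conj:
  assumes U: "unitary_mat n U" and D: "D \<in> carrier_mat n n"
  shows "(adj U * D * U) ^\<^sub>m k = adj U * (D ^\<^sub>m k) * U"
proof (induction k)
  case 0
  have "U \<in> carrier_mat n n" using U by (rule unitary_mat_carrier)
  then show ?case using D unitary_mat_adj_mult[OF U] by simp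
next
  case (Suc k)
  have Uc: "U \<in> carrier_mat n n" using U by (rule unitary_mat_carrier)
  have Dk: "D ^\<^sub>m k \<in> carrier_mat n n" using D by simp
  have "(adj U * D * U) ^\<^sub>m Suc k = (adj U * (D ^\<^sub>m k) * U) * (adj U * D * U)"
    using Suc by simp
  also have "\<dots> = (adj U * (D ^\<^sub>m k) * U) * (adj U * (D * U))"
    using Uc D by (simp add: assoc_mult_mat[of "adj U" n n D n U n])
  also have "\<dots> = (adj U * (D ^\<^sub>m k)) * (D * U)"
    using Uc D Dk unitary_mat_mult_adj[OF U] by (intro mult_mat_inverse_cancel) auto
  also have "\<dots> = adj U * (D ^\<^sub>m k * (D * U))"
    using Uc D Dk by (intro assoc_mult_mat) auto
  also have "D ^\<^sub>m k * (D * U) = D ^\<^sub>m Suc k * U"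
    using Uc D Dk by (simp add: assoc_mult_mat[OF Dk D Uc])
  also have "adj U * (D ^\<^sub>m Suc k * U) = adj U * D ^\<^sub>m Suc k * U"
    using Uc D by (intro assoc_mult_mat[symmetric]) auto
  finally show ?case .
qed

lemma index_unitary_conj_mat_diag:
  assumes U: "U \<in> carrier_mat n n" and "a < n" "b < n"
  shows "(adj U * mat_diag n g * U) $$ (a,b) = (\<Sum>l<n. cnj (U $$ (l,a)) * g l * U $$ (l,b))"
  using assms by (simp add: mat_diag_mult_right[of "adj U" n n] index_mult_mat_lessThan[of _ n n U n])

lemma index_mat_exp_unitary_conj_mat_diag:
  assumes U: "unitary_mat n U" and ab: "a < n" "b < n"
  shows "mat_exp (adj U * mat_diag n d * U) $$ (a,b) = (\<Sum>l<n. cnj (U $$ (l,a)) * exp (d l) * U $$ (l,b))"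
proof -
  have Uc: "U \<in> carrier_mat n n" using U by (rule unitary_mat_carrier)
  have "((adj U * mat_diag n d * U) ^\<^sub>m k) $$ (a,b) / of_nat (fact k)
      = (\<Sum>l<n. cnj (U $$ (l,a)) * (d l ^ k /\<^sub>R fact k) * U $$ (l,b))" for k
    using Uc ab
    by (simp add: pow_unitary_conj[OF U] pow_mat_diag index_unitary_conj_mat_diag sum_divide_distrib
        scaleR_conv_of_real divide_inverse mult_ac sum_distrib_left)
  moreover have "(\<lambda>k. \<Sum>l<n. cnj (U $$ (l,a)) * (d l ^ k /\<^sub>R fact k) * U $$ (l,b)) sums
      (\<Sum>l<n. cnj (U $$ (l,a)) * exp (d l) * U $$ (l,b))"
    by (intro sums_sum sums_mult sums_mult2 exp_converges)
  ultimately show ?thesis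
    unfolding mat_exp_def using Uc ab by (simp add: sums_iff)
qed

text \<open>The eigenvalues of the Boltzmann state; taking \<open>Re\<close> is harmless because the diagonal of \<open>S\<close>
  is real.\<close>
definition gibbs_weight :: "nat \<Rightarrow> complex mat \<Rightarrow> nat \<Rightarrow> real" where
  "gibbs_weight n S l = exp (- Re (S $$ (l,l))) / (\<Sum>m<n. exp (- Re (S $$ (m,m))))"

lemma gibbs_weight_nonneg: "0 \<le> gibbs_weight n S l"
  unfolding gibbs_weight_def by (intro divide_nonneg_nonneg sum_nonneg) auto

lemma sum_gibbs_weight: "0 < n \<Longrightarrow> (\<Sum>l<n. gibbs_weight n S l) = 1"
proof -
  assume "0 < n"
  then have "0 < (\<Sum>m<n. exp (- Re (S $$ (m,m))))" by (intro sum_pos) auto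
  then show ?thesis unfolding gibbs_weight_def by (simp add: sum_divide_distrib[symmetric])
qed

lemma index_rho_boltz:
  assumes U: "unitary_mat n U" and S: "S \<in> carrier_mat n n" "diagonal_mat S"
    and real: "\<forall>i<n. S $$ (i,i) \<in> \<real>" and ab: "a < n" "b < n"
  shows "rho_boltz S U $$ (a,b) = (\<Sum>l<n. cnj (U $$ (l,a)) * of_real (gibbs_weight n S l) * U $$ (l,b))"
proof -
  have Uc: "U \<in> carrier_mat n n" using U by (rule unitary_mat_carrier)
  let ?E = "mat_exp (- (adj U * S * U))" and ?e = "\<lambda>l. exp (- Re (S $$ (l,l)))"
  define s where "s = (\<lambda>l. S $$ (l,l))"
  have S_eq: "S = mat_diag n s"
    using S by (intro eq_matI) (auto simp: diagonal_mat_def mat_diag_def s_def)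
  have "- (adj U * S * U) = adj U * mat_diag n (\<lambda>l. - s l) * U"
    unfolding S_eq using Uc
    by (intro eq_matI) (auto simp: index_unitary_conj_mat_diag[OF Uc] sum_negf[symmetric])
  moreover have "exp (- s l) = of_real (?e l)" if "l < n" for l
    using real that unfolding s_def by (metis Reals_cases Re_complex_of_real exp_of_real of_real_minus)
  ultimately have E: "?E $$ (p,q) = (\<Sum>l<n. cnj (U $$ (l,p)) * of_real (?e l) * U $$ (l,q))"
    if "p < n" "q < n" for p q
    using that by (simp add: index_mat_exp_unitary_conj_mat_diag[OF U])
  have dim_E: "dim_row ?E = n" "dim_col ?E = n"
    using Uc S by (auto simp: mat_exp_def)
  have "mtrace ?E = (\<Sum>p<n. \<Sum>l<n. cnj (U $$ (l,p)) * of_real (?e l) * U $$ (l,p))"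
    unfolding mtrace_def dim_E by (intro sum.cong refl) (simp add: E)
  also have "\<dots> = (\<Sum>l<n. of_real (?e l) * (\<Sum>p<n. U $$ (l,p) * cnj (U $$ (l,p))))"
    by (subst sum.swap) (simp add: sum_distrib_left mult_ac)
  finally have "mtrace ?E = of_real (\<Sum>l<n. ?e l)"
    by (simp add: unitary_row_inner[OF U])
  then show ?thesis
    unfolding rho_boltz_def Let_def using dim_E ab
    by (simp add: E gibbs_weight_def sum_distrib_left sum_divide_distrib mult_ac)
qed

lemma deviation_rho_boltz:
  assumes O: "Obj \<in> carrier_mat Dv Dv" and U: "unitary_mat (Dv*Dh) U"
    and S: "S \<in> carrier_mat (Dv*Dh) (Dv*Dh)" "diagonal_mat S" "\<forall>i<Dv*Dh. S $$ (i,i) \<in> \<real>"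
    and n: "0 < Dv*Dh"
  shows "deviation Obj Dh (rho_boltz S U)
       = trace_form (Dv*Dh) (\<lambda>b a. if b = a then of_real (gibbs_weight (Dv*Dh) S a) else 0)
           (traceless_part (Dv*Dh) (\<lambda>b a. kron Obj (1\<^sub>m Dh) $$ (b,a))) U"
proof -
  let ?n = "Dv*Dh" and ?K = "\<lambda>b a. kron Obj (1\<^sub>m Dh) $$ (b,a)"
  let ?\<sigma> = "\<lambda>l. complex_of_real (gibbs_weight ?n S l)" and ?c = "(\<Sum>i<?n. ?K i i) / of_nat ?n"
  have "deviation Obj Dh (rho_boltz S U)
      = (\<Sum>a<?n. \<Sum>b<?n. ?K b a * (\<Sum>l<?n. cnj (U $$ (l,a)) * ?\<sigma> l * U $$ (l,b)))
        - (\<Sum>a<?n. \<Sum>b<?n. ?K b a * (if a = b then 1 / of_nat ?n else 0))"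
    unfolding deviation_eq_sum[OF O]
    by (simp add: index_rho_boltz[OF U S] right_diff_distrib sum_subtractf)
  also have "(\<Sum>a<?n. \<Sum>b<?n. ?K b a * (\<Sum>l<?n. cnj (U $$ (l,a)) * ?\<sigma> l * U $$ (l,b)))
      = (\<Sum>l<?n. ?\<sigma> l * sandwich ?n ?K U l l)"
    unfolding sandwich_def sum_distrib_left
    by (subst sum.swap, subst (2) sum.swap, subst (3) sum.swap) (simp add: mult_ac)
  also have "(\<Sum>a<?n. \<Sum>b<?n. ?K b a * (if a = b then 1 / of_nat ?n else 0)) = ?c"
    by (simp add: if_distrib[of "\<lambda>z. _ * z"] sum_divide_distrib cong: if_cong)
  also have "?c = (\<Sum>l<?n. ?\<sigma> l) * ?c" \<comment> \<open>this moves \<open>I/D\<close> into the traceless part of \<open>O \<otimes> I\<close>\<close>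
    using sum_gibbs_weight[OF n, of S] by (simp flip: of_real_sum)
  also have "(\<Sum>l<?n. ?\<sigma> l * sandwich ?n ?K U l l) - (\<Sum>l<?n. ?\<sigma> l) * ?c
      = (\<Sum>l<?n. ?\<sigma> l * sandwich ?n (traceless_part ?n ?K) U l l)"
    by (simp add: sandwich_traceless_part[OF U] sum_distrib_right right_diff_distrib sum_subtractf
        sum_divide_distrib)
  also have "\<dots> = trace_form ?n (\<lambda>b a. if b = a then ?\<sigma> a else 0) (traceless_part ?n ?K) U"
    unfolding trace_form_def by (simp add: if_distrib[of "\<lambda>z. z * _"] cong: if_cong)
  finally show ?thesis .
qed

lemma sum_norm_gibbs_diag_le:
  "0 < n \<Longrightarrow> (\<Sum>a<n. \<Sum>b<n. (cmod (if b = a then complex_of_real (gibbs_weight n S a) else 0))\<^sup>2) \<le> 1"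
proof -
  assume n: "0 < n"
  have "(cmod (if b = a then complex_of_real (gibbs_weight n S a) else 0))\<^sup>2
      = (if b = a then gibbs_weight n S a * gibbs_weight n S a else 0)" for a b
    by (simp add: gibbs_weight_nonneg power2_eq_square)
  then have "(\<Sum>a<n. \<Sum>b<n. (cmod (if b = a then complex_of_real (gibbs_weight n S a) else 0))\<^sup>2)
      = (\<Sum>a<n. gibbs_weight n S a * gibbs_weight n S a)"
    by simp
  also have "\<dots> \<le> (\<Sum>a<n. gibbs_weight n S a * 1)"
  proof (intro sum_mono mult_left_mono gibbs_weight_nonneg)
    fix a assume "a \<in> {..<n}"
    then have "gibbs_weight n S a \<le> (\<Sum>l<n. gibbs_weight n S l)"
      by (intro member_le_sum gibbs_weight_nonneg) auto
    then show "gibbs_weight n S a \<le> 1" using sum_gibbs_weight[OF n] by simp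
  qed
  also have "\<dots> = 1" using sum_gibbs_weight[OF n] by simp
  finally show ?thesis .
qed

section \<open>Concentration of the deviation\<close>

lemma (in prob_space) chebyshev_AE_eq:
  fixes f g :: "'a \<Rightarrow> complex"
  assumes "AE x in M. f x = g x" and g: "integrable M (\<lambda>x. g x * cnj (g x))" and t: "0 < t"
  shows "measure M {x \<in> space M. cmod (f x) > t} \<le> Re (\<integral>x. g x * cnj (g x) \<partial>M) / t\<^sup>2"
proof -
  let ?h = "\<lambda>x. Re (g x * cnj (g x))"
  have h: "integrable M ?h" by (rule integrable_Re[OF g])
  have h_eq: "?h x = (cmod (g x))\<^sup>2" for x
    by (simp add: complex_mult_cnj power2_eq_square cmod_def)
  have sets: "{x \<in> space M. t\<^sup>2 \<le> ?h x} \<in> sets M"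
    using borel_measurable_integrable[OF h] by measurable
  have "measure M {x \<in> space M. cmod (f x) > t} \<le> measure M {x \<in> space M. t\<^sup>2 \<le> ?h x}"
  proof (rule finite_measure_mono_AE[OF _ sets])
    show "AE x in M. x \<in> {x \<in> space M. t < cmod (f x)} \<longrightarrow> x \<in> {x \<in> space M. t\<^sup>2 \<le> ?h x}"
      using assms(1)
    proof eventually_elim
      case (elim x)
      have "t < cmod (g x) \<Longrightarrow> t\<^sup>2 \<le> ?h x"
        unfolding h_eq using t by (intro power_mono) auto
      then show ?case using elim by auto
    qed
  qed
  also have "\<dots> \<le> (\<integral>x. ?h x \<partial>M) / t\<^sup>2"
    using t by (intro integral_Markov_inequality_measure[OF h sets]) (auto simp: h_eq)
  also have "(\<integral>x. ?h x \<partial>M) = Re (\<integral>x. g x * cnj (g x) \<partial>M)" by (rule integral_Re[OF g])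
  finally show ?thesis .
qed

lemma sum_sum_norm_eq_0_iff:
  fixes Y :: "nat \<Rightarrow> nat \<Rightarrow> complex"
  shows "(\<Sum>p<n. \<Sum>q<n. (cmod (Y p q))\<^sup>2) = 0 \<longleftrightarrow> (\<forall>p<n. \<forall>q<n. Y p q = 0)"
  by (simp add: sum_nonneg_eq_0_iff sum_nonneg Ball_def)

lemma trace_form_eq_0:
  assumes "(\<Sum>p<n. \<Sum>q<n. (cmod (Y p q))\<^sup>2) * (\<Sum>a<n. \<Sum>b<n. (cmod (X b a))\<^sup>2) = 0"
  shows "trace_form n X Y U = 0"
  using assms sum_sum_norm_eq_0_iff[where Y = Y] sum_sum_norm_eq_0_iff[where Y = "\<lambda>a b. X b a"]
  by (auto simp: trace_form_def sandwich_def)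

lemma trace_form_tail_bound:
  fixes X Y :: "nat \<Rightarrow> nat \<Rightarrow> complex" and f :: "complex mat \<Rightarrow> complex"
  assumes \<delta>: "0 < \<delta>" and Dv: "0 < Dv" and Dh: "0 < Dh"
    and design: "unitary_2_design (Dv*Dh) \<mu>"
    and f: "\<And>U. unitary_mat (Dv*Dh) U \<Longrightarrow> f U = trace_form (Dv*Dh) X Y U"
    and tr: "(\<Sum>p<Dv*Dh. Y p p) = 0"
    and frobenius: "(\<Sum>p<Dv*Dh. \<Sum>q<Dv*Dh. (cmod (Y p q))\<^sup>2) * (\<Sum>a<Dv*Dh. \<Sum>b<Dv*Dh. (cmod (X b a))\<^sup>2)
                    \<le> real (Dv*Dh) * B\<^sup>2"
    and B: "0 \<le> B"
  shows "measure \<mu> {U \<in> space \<mu>. cmod (f U) > sqrt (2 / \<delta>) * B * sqrt (real Dv / real Dh)} \<le> \<delta>"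
proof -
  let ?n = "Dv*Dh" and ?t = "sqrt (2 / \<delta>) * B * sqrt (real Dv / real Dh)"
  let ?Q = "trace_form ?n X Y"
  interpret prob_space \<mu> using design by (simp add: unitary_2_design_def)
  have n: "0 < ?n" using Dv Dh by simp
  have "AE U in \<mu>. unitary_mat ?n U" using design by (simp add: unitary_2_design_def)
  then have f_eq: "AE U in \<mu>. f U = ?Q U" by eventually_elim (rule f)
  show ?thesis
  proof (cases "B = 0")
    case True
    have "(\<Sum>p<?n. \<Sum>q<?n. (cmod (Y p q))\<^sup>2) * (\<Sum>a<?n. \<Sum>b<?n. (cmod (X b a))\<^sup>2) = 0"
      using frobenius True by (intro antisym mult_nonneg_nonneg sum_nonneg) auto
    then have "?Q U = 0" for U by (rule trace_form_eq_0)
    then have "measure \<mu> {U \<in> space \<mu>. cmod (f U) > ?t} \<le> measure \<mu> {}"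
      using f_eq True by (intro finite_measure_mono_AE) (auto elim!: AE_mp)
    then show ?thesis using \<delta> by simp
  next
    case False
    then have t: "0 < ?t" using B \<delta> Dv Dh by simp
    have second_moment: "Re (\<integral>U. ?Q U * cnj (?Q U) \<partial>\<mu>) \<le> 2 * (real ?n * B\<^sup>2) / (real ?n)\<^sup>2"
      using unitary_2_design_expectation_trace_form(2)[where X = X and Y = Y, OF design n tr] frobenius
      by (elim order_trans) (simp add: divide_right_mono)
    have "measure \<mu> {U \<in> space \<mu>. cmod (f U) > ?t} \<le> Re (\<integral>U. ?Q U * cnj (?Q U) \<partial>\<mu>) / ?t\<^sup>2"
      using unitary_2_design_expectation_trace_form(1)[where X = X and Y = Y, OF design n tr] t
      by (rule chebyshev_AE_eq[OF f_eq])
    also have "\<dots> \<le> 2 * (real ?n * B\<^sup>2) / (real ?n)\<^sup>2 / ?t\<^sup>2"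
      using second_moment by (intro divide_right_mono) auto
    also have "\<dots> = \<delta> / (real Dv)\<^sup>2"
      using \<delta> Dv Dh False by (simp add: power_mult_distrib field_simps power2_eq_square)
    also have "\<dots> \<le> \<delta>"
      using \<delta> Dv by (simp add: divide_le_eq one_le_power)
    finally show ?thesis .
  qed
qed

lemma rho_net_tail_bound:
  assumes "0 < \<delta>" "0 < Dv" "0 < Dh" and O: "Obj \<in> carrier_mat Dv Dv" and "unitary_2_design (Dv * Dh) \<mu>"
  shows "measure \<mu> {U \<in> space \<mu>. cmod (deviation Obj Dh (rho_net (Dv * Dh) U))
           > sqrt (2 / \<delta>) * opnorm Obj * sqrt (real Dv / real Dh)} \<le> \<delta>"
proof (rule trace_form_tail_bound[OF assms(1-3,5) deviation_rho_net[OF O]])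
  let ?n = "Dv * Dh" and ?P = "\<lambda>p q. if p = 0 \<and> q = 0 then 1 else 0 :: complex"
  have n: "0 < ?n" using assms by simp
  show "(\<Sum>p<?n. traceless_part ?n ?P p p) = 0" by (rule trace_traceless_part[OF n])
  have "(\<Sum>p<?n. \<Sum>q<?n. (cmod (traceless_part ?n ?P p q))\<^sup>2) \<le> (\<Sum>p<?n. \<Sum>q<?n. (cmod (?P p q))\<^sup>2)"
    by (rule sum_norm_traceless_part_le[OF n])
  also have "\<dots> = (\<Sum>p<?n. \<Sum>q<?n. if p = 0 \<and> q = 0 then 1 else 0)"
    by (intro sum.cong refl) simp
  also have "\<dots> = 1"
    using sum_sum_if_both_zero[OF n, of "\<lambda>_ _. 1::real"] .
  finally have "(\<Sum>p<?n. \<Sum>q<?n. (cmod (traceless_part ?n ?P p q))\<^sup>2)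
      * (\<Sum>a<?n. \<Sum>b<?n. (cmod (kron Obj (1\<^sub>m Dh) $$ (b,a)))\<^sup>2) \<le> 1 * (real ?n * (opnorm Obj)\<^sup>2)"
    using sum_norm_kron_one_mat_le[OF O \<open>0 < Dh\<close>] by (intro mult_mono) (auto intro!: sum_nonneg)
  then show "(\<Sum>p<?n. \<Sum>q<?n. (cmod (traceless_part ?n ?P p q))\<^sup>2)
      * (\<Sum>a<?n. \<Sum>b<?n. (cmod (kron Obj (1\<^sub>m Dh) $$ (b,a)))\<^sup>2) \<le> real ?n * (opnorm Obj)\<^sup>2"
    by simp
  show "0 \<le> opnorm Obj" using O \<open>0 < Dv\<close> by (intro opnorm_nonneg) simp
qed

lemma rho_boltz_tail_bound:
  assumes "0 < \<delta>" "0 < Dv" "0 < Dh" and O: "Obj \<in> carrier_mat Dv Dv" and "unitary_2_design (Dv * Dh) \<mu>"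
    and S: "S \<in> carrier_mat (Dv * Dh) (Dv * Dh)" "diagonal_mat S" "\<forall>i < Dv * Dh. S $$ (i,i) \<in> \<real>"
  shows "measure \<mu> {U \<in> space \<mu>. cmod (deviation Obj Dh (rho_boltz S U))
           > sqrt (2 / \<delta>) * opnorm Obj * sqrt (real Dv / real Dh)} \<le> \<delta>"
proof -
  let ?n = "Dv * Dh" and ?K = "\<lambda>b a. kron Obj (1\<^sub>m Dh) $$ (b,a)"
  have n: "0 < ?n" using assms by simp
  show ?thesis
  proof (rule trace_form_tail_bound[OF assms(1-3,5) deviation_rho_boltz[OF O _ S n]])
    show "(\<Sum>p<?n. traceless_part ?n ?K p p) = 0" by (rule trace_traceless_part[OF n])
    have "(\<Sum>p<?n. \<Sum>q<?n. (cmod (traceless_part ?n ?K p q))\<^sup>2) \<le> (\<Sum>p<?n. \<Sum>q<?n. (cmod (?K p q))\<^sup>2)"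
      by (rule sum_norm_traceless_part_le[OF n])
    also have "\<dots> \<le> real ?n * (opnorm Obj)\<^sup>2"
      using sum_norm_kron_one_mat_le[OF O \<open>0 < Dh\<close>] by (subst sum.swap) simp
    finally have "(\<Sum>p<?n. \<Sum>q<?n. (cmod (traceless_part ?n ?K p q))\<^sup>2)
        * (\<Sum>a<?n. \<Sum>b<?n. (cmod (if b = a then complex_of_real (gibbs_weight ?n S a) else 0))\<^sup>2)
        \<le> (real ?n * (opnorm Obj)\<^sup>2) * 1"
      using sum_norm_gibbs_diag_le[OF n] by (intro mult_mono) (auto intro!: sum_nonneg)
    then show "(\<Sum>p<?n. \<Sum>q<?n. (cmod (traceless_part ?n ?K p q))\<^sup>2)
        * (\<Sum>a<?n. \<Sum>b<?n. (cmod (if b = a then complex_of_real (gibbs_weight ?n S a) else 0))\<^sup>2)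
        \<le> real ?n * (opnorm Obj)\<^sup>2"
      by simp
    show "0 \<le> opnorm Obj" using O \<open>0 < Dv\<close> by (intro opnorm_nonneg) simp
  qed
qed

theorem proposition2:
  shows "\<forall>\<delta>::real. \<delta> > 0 \<longrightarrow> (\<exists>C::real. \<forall>(Dv::nat) (Dh::nat) (Obj::complex mat) (S::complex mat) \<mu>.
     0 < Dv \<and> 0 < Dh \<and> Obj \<in> carrier_mat Dv Dv \<and>
     S \<in> carrier_mat (Dv * Dh) (Dv * Dh) \<and> diagonal_mat S \<and>
     (\<forall>i < Dv * Dh. S $$ (i,i) \<in> \<real>) \<and>
     unitary_2_design (Dv * Dh) \<mu>
     \<longrightarrow>
     measure \<mu> {U \<in> space \<mu>. cmod (deviation Obj Dh (rho_net (Dv * Dh) U))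
                    > C * opnorm Obj * sqrt (real Dv / real Dh)} \<le> \<delta> \<and>
     measure \<mu> {U \<in> space \<mu>. cmod (deviation Obj Dh (rho_boltz S U))
                    > C * opnorm Obj * sqrt (real Dv / real Dh)} \<le> \<delta>)"
  \<comment> \<open>unification with the two tail bounds instantiates \<open>C = sqrt (2 / \<delta>)\<close>\<close>
  by (intro allI impI exI conjI; elim conjE) (rule rho_net_tail_bound rho_boltz_tail_bound; assumption)+

end
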